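(* Let $\Omega\subset S^{n-1}$ be a closed set not contained in any closed hemisphere of $S^{n-1}$, and let $\rho_0:\Omega\rightarrow(0,\infty)$ and $f:\Omega\rightarrow\mathbb{R}$ be continuous. Let $\langle\rho_t\rangle$ be a logarithmic family of convex hulls generated by $(\rho_0,f)$, and let $q\neq0$, $j\neq n$. Then for every $Q\in\mathcal{S}_o^n$, $$\lim_{t\rightarrow0}\frac{\widetilde{W}_{q,j}(\langle\rho_t\rangle^\ast,Q)-\widetilde{W}_{q,j}(\langle\rho_0\rangle^\ast,Q)}{t}=-q\int_{\Omega}f(u)\,d\widetilde{\mathcal{C}}_{q,j}(\langle\rho_0\rangle^\ast,Q,u).$$
   Context: $\mathcal{K}_o^n$: convex bodies in $\mathbb{R}^n$ containing the origin in their interiors; $\mathcal{S}_o^n$: compact sets star-shaped about the origin with positive continuous radial function $\rho_Q(x)=\max\{\lambda\ge0:\lambda x\in Q\}$. $h_M$ is the support function, $du$ spherical Lebesgue measure. A logarithmic family of convex hulls generated by $(\rho_0,f)$: for some $\delta>0$ and each $t\in(-\delta,\delta)$, $\rho_t:\Omega\to(0,\infty)$ is continuous with $\log\rho_t(u)=\log\rho_0(u)+tf(u)+o(t,u)$, where $o(t,\cdot)$ is continuous on $\Omega$ and $o(t,\cdot)/t\to0$ uniformly on $\Omega$ as $t\to0$; and $\langle\rho_t\rangle=\mathrm{conv}\{\rho_t(u)u:u\in\Omega\}$. $K^*=\{x: x\cdot y\le1\ \forall y\in K\}$ is the polar body. For $q\in\mathbb{R}$, $j\ne n$, $M\in\mathcal{K}_o^n$,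 $Q\in\mathcal{S}_o^n$: $\widetilde{W}_{q,j}(M,Q)=\frac1n\int_{S^{n-1}}\rho_M^q\rho_Q^{n-q-j}\,du$; $R^*_M(\eta)=\{u\in S^{n-1}:\rho_M(u)u\cdot v=h_M(v)\text{ for some }v\in\eta\}$ for Borel $\eta\subseteq S^{n-1}$; and $\widetilde{\mathcal{C}}_{q,j}(M,Q,\eta)=\frac1n\int_{R^*_M(\eta)}\rho_M^q(u)\rho_Q^{n-q-j}(u)\,du$. *)

theory Defs
  imports "HOL-Analysis.Analysis"
begin

text \<open>Spherical Lebesgue measure on the unit sphere of a Euclidean space of dimension
  n = DIM('a), defined via the cone measure: sigma(A) = n * vol{r u : u in A, 0 < r < 1}.\<close>
definition sphere_measure :: "'a::euclidean_space measure" where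
  "sphere_measure =
     density (distr (restrict_space lborel (ball 0 1 - {0}))
                    (restrict_space borel (sphere 0 1)) (\<lambda>x. x /\<^sub>R norm x))
             (\<lambda>_. ennreal (real DIM('a)))"

definition support_fun :: "'a::euclidean_space set \<Rightarrow> 'a \<Rightarrow> real" where
  "support_fun M v = Sup ((\<lambda>x. x \<bullet> v) ` M)"

definition radial_fun :: "'a::euclidean_space set \<Rightarrow> 'a \<Rightarrow> real" where
  "radial_fun Q x = Sup {s::real. s \<ge> 0 \<and> s *\<^sub>R x \<in> Q}"

definition convex_body_o :: "'a::euclidean_space set \<Rightarrow> bool" where
  "convex_body_o K \<longleftrightarrow> convex K \<and> compact K \<and> 0 \<in> interior K"

definition star_body_o :: "'a::euclidean_space set \<Rightarrow> bool" where
  "star_body_o Q \<longleftrightarrow> compact Q \<and> (\<forall>x\<in>Q. \<forall>s::real. 0 \<le> s \<and> s \<le> 1 \<longrightarrow> s *\<^sub>R x \<in> Q)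
     \<and> (\<forall>u\<in>sphere 0 1. radial_fun Q u > 0) \<and> continuous_on (sphere 0 1) (radial_fun Q)"

definition polar_body :: "'a::euclidean_space set \<Rightarrow> 'a set" where
  "polar_body K = {x. \<forall>y\<in>K. x \<bullet> y \<le> 1}"

definition conv_hull_gen :: "'a::euclidean_space set \<Rightarrow> ('a \<Rightarrow> real) \<Rightarrow> 'a set" where
  "conv_hull_gen \<Omega> \<rho> = convex hull ((\<lambda>u. \<rho> u *\<^sub>R u) ` \<Omega>)"

definition log_family :: "'a::euclidean_space set \<Rightarrow> ('a \<Rightarrow> real) \<Rightarrow> ('a \<Rightarrow> real)
    \<Rightarrow> (real \<Rightarrow> 'a \<Rightarrow> real) \<Rightarrow> bool" where
  "log_family \<Omega> \<rho>0 f \<rho> \<longleftrightarrow>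
     (\<exists>\<delta>>0.
        (\<forall>t. \<bar>t\<bar> < \<delta> \<longrightarrow> continuous_on \<Omega> (\<rho> t) \<and> (\<forall>u\<in>\<Omega>. \<rho> t u > 0)) \<and>
        (\<forall>u\<in>\<Omega>. \<rho> 0 u = \<rho>0 u) \<and>
        (\<forall>\<epsilon>>0. \<exists>d>0. \<forall>t. t \<noteq> 0 \<and> \<bar>t\<bar> < d \<longrightarrow>
            (\<forall>u\<in>\<Omega>. \<bar>(ln (\<rho> t u) - ln (\<rho>0 u) - t * f u) / t\<bar> \<le> \<epsilon>)))"

definition dual_W :: "real \<Rightarrow> real \<Rightarrow> 'a::euclidean_space set \<Rightarrow> 'a set \<Rightarrow> real" where
  "dual_W q j M Q = (1 / real DIM('a)) *
     integral\<^sup>L sphere_measure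
       (\<lambda>u. radial_fun M u powr q * radial_fun Q u powr (real DIM('a) - q - j))"

definition rev_radial_gauss :: "'a::euclidean_space set \<Rightarrow> 'a set \<Rightarrow> 'a set" where
  "rev_radial_gauss M \<eta> = {u \<in> sphere 0 1.
      \<exists>v\<in>\<eta>. (radial_fun M u *\<^sub>R u) \<bullet> v = support_fun M v}"

definition dual_curv_measure :: "real \<Rightarrow> real \<Rightarrow> 'a::euclidean_space set \<Rightarrow> 'a set \<Rightarrow> 'a measure" where
  "dual_curv_measure q j M Q =
     measure_of (sphere 0 1) (sets (restrict_space borel (sphere 0 1)))
       (\<lambda>\<eta>. ennreal ((1 / real DIM('a)) *
          (LINT u : rev_radial_gauss M \<eta> | completion sphere_measure.
             radial_fun M u powr q * radial_fun Q u powr (real DIM('a) - q - j))))"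

end

theory Submission
  imports Defs
begin

text \<open>
  Write \<open>h\<^sub>t\<close> for the support function of the convex hull of the points \<open>\<rho>\<^sub>t(u) u\<close>,
  \<open>u \<in> \<Omega>\<close>. The radial function of its polar body is \<open>1 / h\<^sub>t\<close>, so the dual quermassintegral
  is \<open>(1/n) \<integral> h\<^sub>t(v) powr (-q) \<rho>\<^sub>Q(v) powr (n - q - j) dv\<close>, and everything reduces to
  differentiating \<open>ln h\<^sub>t(v)\<close> at \<open>t = 0\<close> under the integral sign.

  As \<open>h\<^sub>t(v)\<close> is the maximum of \<open>\<rho>\<^sub>t(u) (u \<bullet> v)\<close> over \<open>\<Omega>\<close>, the increment of \<open>ln h\<^sub>t(v)\<close> lies
  between the increments of \<open>ln \<rho>\<^sub>t\<close> at a maximiser for \<open>\<rho>\<^sub>0\<close> and at a maximiser for \<open>\<rho>\<^sub>t\<close>.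
  If the maximiser \<open>\<alpha>(v)\<close> for \<open>\<rho>\<^sub>0\<close> is unique, the maximisers for \<open>\<rho>\<^sub>t\<close> converge to it and the
  derivative is \<open>f(\<alpha>(v))\<close>. Uniqueness fails only on a null set of directions: for every maximiser
  \<open>u\<close>, \<open>\<rho>\<^sub>0(u) u\<close> is a subgradient of the convex function \<open>h\<^sub>0\<close> at \<open>v\<close>, and a convex function has
  a unique subgradient outside a Lebesgue null set, because on every coordinate line its two
  one-sided derivatives differ only at countably many points.

  Dominated convergence then gives the derivative \<open>-q (1/n) \<integral> f(\<alpha>(v)) h\<^sub>0(v) powr (-q) \<rho>\<^sub>Q(v) powr (n - q - j) dv\<close>.
  Outside the same null set, \<open>v\<close> lies in the reverse radial Gauss image of \<open>\<eta>\<close> exactly when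
  \<open>\<alpha>(v) \<in> \<eta>\<close>, so the dual curvature measure of the polar body is the image of the measure with
  this density (without \<open>f\<close>) under \<open>\<alpha>\<close>, which identifies the derivative with \<open>-q\<close> times the integral of \<open>f\<close>.
\<close>

section \<open>Kinks of convex functions\<close>

lemma null_set_lborel_if_countable_lines:
  fixes T :: "'a::euclidean_space set" and b :: 'a
  assumes T: "T \<in> sets borel" and b: "b \<in> Basis"
    and lines: "\<And>z. countable {s::real. z + s *\<^sub>R b \<in> T}"
  shows "T \<in> null_sets lborel"
proof -
  interpret P: product_sigma_finite "\<lambda>_::'a. lborel :: real measure"
    by (simp add: product_sigma_finite_def lborel.sigma_finite_measure_axioms)
  have meas: "(\<lambda>f. \<Sum>b\<in>Basis. f b *\<^sub>R b) \<in> measurable (\<Pi>\<^sub>M b\<in>Basis. (lborel::real measure)) (borel :: 'a measure)"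
    by measurable
  have "emeasure lborel T = (\<integral>\<^sup>+x. indicator T x \<partial>(lborel::'a measure))"
    using T by simp
  also have "\<dots> = (\<integral>\<^sup>+f. indicator T (\<Sum>b\<in>Basis. f b *\<^sub>R b) \<partial>(\<Pi>\<^sub>M b\<in>Basis. (lborel::real measure)))"
    by (subst lborel_eq) (rule nn_integral_distr[OF meas], use T in simp)
  also have "\<dots> = (\<integral>\<^sup>+f. indicator T (\<Sum>b\<in>Basis. f b *\<^sub>R b) \<partial>(\<Pi>\<^sub>M b\<in>insert b (Basis - {b}). (lborel::real measure)))"
    using b by (simp add: insert_absorb)
  also have "\<dots> = (\<integral>\<^sup>+x. (\<integral>\<^sup>+y. indicator T (\<Sum>b'\<in>Basis. (x(b := y)) b' *\<^sub>R b') \<partial>lborel)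
                     \<partial>(\<Pi>\<^sub>M b\<in>Basis - {b}. (lborel::real measure)))"
    by (rule P.product_nn_integral_insert) (use b T in \<open>auto simp: insert_absorb\<close>)
  also have "\<dots> = (\<integral>\<^sup>+x. 0 \<partial>(\<Pi>\<^sub>M b\<in>Basis - {b}. (lborel::real measure)))"
  proof (rule nn_integral_cong)
    fix x :: "'a \<Rightarrow> real"
    define z where "z = (\<Sum>b'\<in>Basis - {b}. x b' *\<^sub>R b')"
    have line: "(\<Sum>b'\<in>Basis. (x(b := y)) b' *\<^sub>R b') = z + y *\<^sub>R b" for y
      using b unfolding z_def by (subst sum.remove[of Basis b]) (auto intro!: sum.cong)
    have "AE y in lborel. indicator T (z + y *\<^sub>R b) = (0::ennreal)"
      using AE_not_in[OF countable_imp_null_set_lborel[OF lines]] by eventually_elim (simp add: indicator_def)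
    then show "(\<integral>\<^sup>+y. indicator T (\<Sum>b'\<in>Basis. (x(b := y)) b' *\<^sub>R b') \<partial>lborel) = 0"
      unfolding line using nn_integral_cong_AE by fastforce
  qed
  finally show ?thesis using T by (simp add: null_sets_def)
qed

lemma convex_on_line:
  assumes "convex_on UNIV g"
  shows "convex_on UNIV (\<lambda>s::real. g (z + s *\<^sub>R b))"
proof (rule convex_onI)
  fix t x y :: real assume "0 < t" "t < 1"
  have "z + ((1 - t) *\<^sub>R x + t *\<^sub>R y) *\<^sub>R b = (1 - t) *\<^sub>R (z + x *\<^sub>R b) + t *\<^sub>R (z + y *\<^sub>R b)"
    by (simp add: algebra_simps)
  then show "g (z + ((1 - t) *\<^sub>R x + t *\<^sub>R y) *\<^sub>R b) \<le> (1 - t) * g (z + x *\<^sub>R b) + t * g (z + y *\<^sub>R b)"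
    using convex_onD[OF assms, of t] \<open>0 < t\<close> \<open>t < 1\<close> by simp
qed auto

lemma diff_divide_diff_swap: "(a - b) / (c - d) = (b - a) / (d - c :: real)"
  by (metis minus_diff_eq minus_divide_divide)

lemma convex_chord_slopes:
  fixes \<phi> :: "real \<Rightarrow> real"
  assumes "convex_on UNIV \<phi>" "x < t" "t < y"
  shows "(\<phi> t - \<phi> x) / (t - x) \<le> (\<phi> y - \<phi> x) / (y - x)"
    and "(\<phi> y - \<phi> x) / (y - x) \<le> (\<phi> y - \<phi> t) / (y - t)"
  using convex_on_slope_le[OF assms(1) _ _ assms(2,3)] by (metis UNIV_I diff_divide_diff_swap)+

definition right_dir_deriv :: "('a::real_vector \<Rightarrow> real) \<Rightarrow> 'a \<Rightarrow> 'a \<Rightarrow> real" where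
  "right_dir_deriv g b y = (INF h\<in>{0<..}. (g (y + h *\<^sub>R b) - g y) / h)"

lemma right_dir_deriv_line:
  "right_dir_deriv g (c *\<^sub>R b) (z + s *\<^sub>R b) = right_dir_deriv (\<lambda>s. g (z + s *\<^sub>R b)) c s"
  unfolding right_dir_deriv_def by (simp add: algebra_simps)

context
  fixes g :: "'a::real_vector \<Rightarrow> real"
  assumes convex: "convex_on UNIV g"
begin

lemma dir_quotient_mono:
  assumes "0 < h" "h \<le> h'"
  shows "(g (y + h *\<^sub>R b) - g y) / h \<le> (g (y + h' *\<^sub>R b) - g y) / h'"
  using convex_chord_slopes(1)[OF convex_on_line[OF convex, of y b], of 0 h h'] assms
  by (cases "h = h'") simp_all

lemma dir_quotient_lower:
  assumes "0 < h"
  shows "g y - g (y - b) \<le> (g (y + h *\<^sub>R b) - g y) / h"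
  using convex_chord_slopes[OF convex_on_line[OF convex, of y b], of "-1" 0 h] assms by simp

lemma bdd_below_dir_quotients:
  "H \<subseteq> {0<..} \<Longrightarrow> bdd_below ((\<lambda>h. (g (y + h *\<^sub>R b) - g y) / h) ` H)"
  by (rule bdd_belowI[of _ "g y - g (y - b)"]) (auto intro: dir_quotient_lower)

lemma right_dir_deriv_le:
  "0 < h \<Longrightarrow> right_dir_deriv g b y \<le> (g (y + h *\<^sub>R b) - g y) / h"
  unfolding right_dir_deriv_def by (rule cINF_lower[OF bdd_below_dir_quotients]) auto

end

lemma le_right_dir_deriv:
  "(\<And>h. 0 < h \<Longrightarrow> c \<le> (g (y + h *\<^sub>R b) - g y) / h) \<Longrightarrow> c \<le> right_dir_deriv g b y"
  unfolding right_dir_deriv_def by (rule cINF_greatest) auto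

lemma right_dir_deriv_eq_INF_rat:
  assumes convex: "convex_on UNIV g"
  shows "right_dir_deriv g b y = (INF h\<in>{h\<in>\<rat>. 0 < h}. (g (y + h *\<^sub>R b) - g y) / h)"
proof (rule antisym)
  show "right_dir_deriv g b y \<le> (INF h\<in>{h\<in>\<rat>. 0 < h}. (g (y + h *\<^sub>R b) - g y) / h)"
    by (rule cINF_greatest) (auto intro!: right_dir_deriv_le[OF convex] exI[of _ 1])
  show "(INF h\<in>{h\<in>\<rat>. 0 < h}. (g (y + h *\<^sub>R b) - g y) / h) \<le> right_dir_deriv g b y"
  proof (rule le_right_dir_deriv)
    fix h :: real assume "0 < h"
    then obtain h' where h': "h' \<in> \<rat>" "0 < h'" "h' < h" using Rats_dense_in_real[of 0 h] by blast
    have "(INF h\<in>{h\<in>\<rat>. 0 < h}. (g (y + h *\<^sub>R b) - g y) / h) \<le> (g (y + h' *\<^sub>R b) - g y) / h'"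
      by (rule cINF_lower[OF bdd_below_dir_quotients[OF convex]]) (use h' in auto)
    also have "\<dots> \<le> (g (y + h *\<^sub>R b) - g y) / h"
      using dir_quotient_mono[OF convex h'(2)] h'(3) by simp
    finally show "(INF h\<in>{h\<in>\<rat>. 0 < h}. (g (y + h *\<^sub>R b) - g y) / h) \<le> (g (y + h *\<^sub>R b) - g y) / h" .
  qed
qed

lemma borel_measurable_right_dir_deriv:
  fixes g :: "'a::euclidean_space \<Rightarrow> real"
  assumes convex: "convex_on UNIV g"
  shows "right_dir_deriv g b \<in> borel_measurable borel"
proof -
  have cont: "continuous_on UNIV g" by (rule convex_on_continuous[OF open_UNIV convex])
  have "(\<lambda>y. g (y + h *\<^sub>R b)) \<in> borel_measurable borel" for h
    by (intro borel_measurable_continuous_onI continuous_intros continuous_on_compose2[OF cont]) auto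
  moreover have "g \<in> borel_measurable borel" by (rule borel_measurable_continuous_onI[OF cont])
  moreover have "countable {h::real. h \<in> \<rat> \<and> 0 < h}"
    by (rule countable_subset[OF _ countable_rat]) auto
  ultimately show ?thesis
    unfolding right_dir_deriv_eq_INF_rat[OF convex, abs_def] by measurable
qed

lemma countable_kinks_real:
  fixes \<phi> :: "real \<Rightarrow> real"
  assumes convex: "convex_on UNIV \<phi>"
  shows "countable {s. - right_dir_deriv \<phi> (- 1) s < right_dir_deriv \<phi> 1 s}"
proof -
  define A where "A = {s. - right_dir_deriv \<phi> (- 1) s < right_dir_deriv \<phi> 1 s}"
  have ordered: "right_dir_deriv \<phi> 1 s \<le> - right_dir_deriv \<phi> (- 1) s'" if "s < s'" for s s'
  proof -
    define h where "h = (s' - s) / 2"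
    have h: "0 < h" "s + h < s'" "s < s' - h" using that by (auto simp: h_def field_simps)
    have "right_dir_deriv \<phi> 1 s \<le> (\<phi> (s + h) - \<phi> s) / h"
      using right_dir_deriv_le[OF convex h(1), of 1 s] by simp
    also have "\<dots> \<le> (\<phi> s' - \<phi> s) / (s' - s)"
      using convex_chord_slopes(1)[OF convex, of s "s + h" s'] h by simp
    also have "\<dots> \<le> (\<phi> s' - \<phi> (s' - h)) / h"
      using convex_chord_slopes(2)[OF convex, of s "s' - h" s'] h by simp
    also have "\<dots> \<le> - right_dir_deriv \<phi> (- 1) s'"
      using right_dir_deriv_le[OF convex h(1), of "- 1" s'] by (simp add: diff_divide_distrib)
    finally show ?thesis .
  qed
  have "\<forall>s\<in>A. \<exists>r\<in>\<rat>. - right_dir_deriv \<phi> (- 1) s < r \<and> r < right_dir_deriv \<phi> 1 s"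
    unfolding A_def using Rats_dense_in_real by blast
  then obtain r where r: "\<And>s. s \<in> A \<Longrightarrow> r s \<in> \<rat> \<and> - right_dir_deriv \<phi> (- 1) s < r s \<and> r s < right_dir_deriv \<phi> 1 s"
    by metis
  have "r s < r s'" if "s \<in> A" "s' \<in> A" "s < s'" for s s'
    using r[OF that(1)] r[OF that(2)] ordered[OF that(3)] by linarith
  then have "inj_on r A"
    by (metis inj_onI linorder_neqE_linordered_idom order_less_irrefl)
  moreover have "countable (r ` A)"
    using r by (intro countable_subset[OF _ countable_rat]) auto
  ultimately show ?thesis
    unfolding A_def[symmetric] by (blast intro: countable_image_inj_on)
qed

definition kinks :: "('a::euclidean_space \<Rightarrow> real) \<Rightarrow> 'a set" where
  "kinks g = {y. \<exists>b\<in>Basis. - right_dir_deriv g (- b) y < right_dir_deriv g b y}"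

lemma kinks_null:
  fixes g :: "'a::euclidean_space \<Rightarrow> real"
  assumes convex: "convex_on UNIV g"
  shows "kinks g \<in> null_sets lborel"
proof -
  have "{y. - right_dir_deriv g (- b) y < right_dir_deriv g b y} \<in> null_sets lborel" if b: "b \<in> Basis" for b
  proof (rule null_set_lborel_if_countable_lines[OF _ b])
    show "{y. - right_dir_deriv g (- b) y < right_dir_deriv g b y} \<in> sets borel"
      using borel_measurable_right_dir_deriv[OF convex] by measurable
    fix z
    define \<psi> where "\<psi> s = g (z + s *\<^sub>R b)" for s
    have "right_dir_deriv g b (z + s *\<^sub>R b) = right_dir_deriv \<psi> 1 s"
      and "right_dir_deriv g (- b) (z + s *\<^sub>R b) = right_dir_deriv \<psi> (- 1) s" for s
      using right_dir_deriv_line[of g 1 b z s] right_dir_deriv_line[of g "- 1" b z s]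
      by (simp_all add: \<psi>_def[abs_def])
    then have "{s. z + s *\<^sub>R b \<in> {y. - right_dir_deriv g (- b) y < right_dir_deriv g b y}}
        = {s. - right_dir_deriv \<psi> (- 1) s < right_dir_deriv \<psi> 1 s}"
      by simp
    then show "countable {s. z + s *\<^sub>R b \<in> {y. - right_dir_deriv g (- b) y < right_dir_deriv g b y}}"
      using countable_kinks_real[OF convex_on_line[OF convex, of z b]] by (simp add: \<psi>_def[abs_def])
  qed
  moreover have "kinks g = (\<Union>b\<in>Basis. {y. - right_dir_deriv g (- b) y < right_dir_deriv g b y})"
    by (auto simp: kinks_def)
  ultimately show ?thesis by (simp add: null_sets.finite_UN)
qed

lemma right_dir_deriv_scaleR:
  assumes homogeneous: "\<And>c y. 0 < c \<Longrightarrow> g (c *\<^sub>R y) = c * g y" and c: "0 < c"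
  shows "right_dir_deriv g b (c *\<^sub>R y) = right_dir_deriv g b y"
proof -
  have quotient: "(g (c *\<^sub>R y + h *\<^sub>R b) - g (c *\<^sub>R y)) / h = (g (y + (h / c) *\<^sub>R b) - g y) / (h / c)" for h
  proof -
    have "c *\<^sub>R y + h *\<^sub>R b = c *\<^sub>R (y + (h / c) *\<^sub>R b)" using c by (simp add: algebra_simps)
    then show ?thesis using c by (simp add: homogeneous right_diff_distrib[symmetric])
  qed
  then have "right_dir_deriv g b (c *\<^sub>R y) = (INF h\<in>{0<..}. (\<lambda>h. (g (y + h *\<^sub>R b) - g y) / h) (h / c))"
    unfolding right_dir_deriv_def by (simp only: quotient)
  also have "\<dots> = (INF h\<in>(\<lambda>h. h / c) ` {0<..}. (g (y + h *\<^sub>R b) - g y) / h)"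
    by (simp add: image_image)
  also have "(\<lambda>h. h / c) ` {0<..} = {0<..}"
    using c by (auto simp: image_iff intro!: bexI[of _ "_ * c"])
  finally show ?thesis unfolding right_dir_deriv_def .
qed

lemma kinks_scaleR_iff:
  assumes "\<And>c y. 0 < c \<Longrightarrow> g (c *\<^sub>R y) = c * g y" "0 < c"
  shows "c *\<^sub>R y \<in> kinks g \<longleftrightarrow> y \<in> kinks g"
  unfolding kinks_def by (simp add: right_dir_deriv_scaleR[OF assms])

definition subgradients :: "('a::real_inner \<Rightarrow> real) \<Rightarrow> 'a \<Rightarrow> 'a set" where
  "subgradients g y = {p. \<forall>z. g y + p \<bullet> (z - y) \<le> g z}"

lemma subgradient_le_right_dir_deriv:
  assumes "p \<in> subgradients g y"
  shows "p \<bullet> b \<le> right_dir_deriv g b y"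
proof (rule le_right_dir_deriv)
  fix h :: real assume "0 < h"
  have "g y + p \<bullet> ((y + h *\<^sub>R b) - y) \<le> g (y + h *\<^sub>R b)"
    using assms unfolding subgradients_def by blast
  then have "g y + h * (p \<bullet> b) \<le> g (y + h *\<^sub>R b)" by simp
  then show "p \<bullet> b \<le> (g (y + h *\<^sub>R b) - g y) / h"
    using \<open>0 < h\<close> by (simp add: le_divide_eq mult.commute)
qed

lemma subgradients_unique_off_kinks:
  assumes "y \<notin> kinks g" "p \<in> subgradients g y" "p' \<in> subgradients g y"
  shows "p = p'"
proof (rule euclidean_eqI)
  fix b :: 'a assume b: "b \<in> Basis"
  have "p \<bullet> b = right_dir_deriv g b y" if "p \<in> subgradients g y" for p
    using subgradient_le_right_dir_deriv[OF that, of b] subgradient_le_right_dir_deriv[OF that, of "- b"]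
      assms(1) b
    unfolding kinks_def by (auto simp: not_less)
  then show "p \<bullet> b = p' \<bullet> b" using assms(2,3) by metis
qed

section \<open>The spherical Lebesgue measure\<close>

lemma space_sphere_measure: "space sphere_measure = sphere 0 1"
  unfolding sphere_measure_def by (simp add: space_restrict_space)

lemma sets_sphere_measure: "sets sphere_measure = sets (restrict_space borel (sphere 0 1))"
  unfolding sphere_measure_def by simp

lemma sets_sphere_measure_iff: "A \<in> sets sphere_measure \<longleftrightarrow> A \<subseteq> sphere 0 1 \<and> A \<in> sets borel"
  unfolding sets_sphere_measure by (simp add: sets_restrict_space_iff)

lemma emeasure_sphere_measure:
  fixes B :: "'a::euclidean_space set"
  assumes B: "B \<in> sets sphere_measure"
  shows "emeasure sphere_measure B =
           ennreal (real DIM('a)) * emeasure lborel {x \<in> ball 0 1 - {0}. x /\<^sub>R norm x \<in> B}"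
proof -
  let ?D = "distr (restrict_space lborel (ball (0::'a) 1 - {0})) (restrict_space borel (sphere 0 1))
              (\<lambda>x. x /\<^sub>R norm x)"
  have normalize: "(\<lambda>x::'a. x /\<^sub>R norm x) \<in> restrict_space lborel (ball 0 1 - {0}) \<rightarrow>\<^sub>M restrict_space borel (sphere 0 1)"
    by (rule measurable_restrict_space2) (auto simp: space_restrict_space intro: measurable_restrict_space1)
  have "emeasure sphere_measure B = ennreal (real DIM('a)) * emeasure ?D B"
    using B unfolding sphere_measure_def by (simp add: emeasure_density nn_integral_cmult_indicator)
  also have "emeasure ?D B = emeasure lborel ((\<lambda>x. x /\<^sub>R norm x) -` B \<inter> (ball 0 1 - {0}))"
    using B by (simp add: sets_sphere_measure emeasure_distr[OF normalize] space_restrict_space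
        emeasure_restrict_space)
  also have "(\<lambda>x::'a. x /\<^sub>R norm x) -` B \<inter> (ball 0 1 - {0}) = {x \<in> ball 0 1 - {0}. x /\<^sub>R norm x \<in> B}"
    by auto
  finally show ?thesis .
qed

lemma finite_measure_sphere_measure: "finite_measure (sphere_measure :: 'a::euclidean_space measure)"
proof (rule finite_measureI)
  have "sphere 0 1 \<in> sets (sphere_measure :: 'a measure)" by (simp add: sets_sphere_measure_iff)
  then have "emeasure (sphere_measure :: 'a measure) (sphere 0 1)
          = ennreal (real DIM('a)) * emeasure lborel {x::'a \<in> ball 0 1 - {0}. x /\<^sub>R norm x \<in> sphere 0 1}"
    by (rule emeasure_sphere_measure)
  also have "\<dots> \<le> ennreal (real DIM('a)) * emeasure lborel (cball (0::'a) 1)"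
    by (intro mult_left_mono emeasure_mono) auto
  also have "\<dots> < \<infinity>"
    using emeasure_lborel_cball_finite[of "0::'a" 1] by (simp add: ennreal_mult_less_top less_top)
  finally show "emeasure (sphere_measure :: 'a measure) (space sphere_measure) \<noteq> \<infinity>"
    by (simp add: space_sphere_measure less_top)
qed

lemma null_sets_sphere_measure_if_cone:
  fixes A :: "'a::euclidean_space set"
  assumes A: "A \<in> sets sphere_measure" and N: "N \<in> null_sets lborel"
    and cone: "\<And>x. x \<in> ball 0 1 - {0} \<Longrightarrow> x /\<^sub>R norm x \<in> A \<Longrightarrow> x \<in> N"
  shows "A \<in> null_sets sphere_measure"
proof -
  have "{x \<in> ball 0 1 - {0}. x /\<^sub>R norm x \<in> A} = (ball 0 1 - {0}) \<inter> ((\<lambda>x::'a. x /\<^sub>R norm x) -` A \<inter> space borel)"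
    by auto
  also have "\<dots> \<in> sets borel"
    using A by (intro sets.Int measurable_sets[of _ borel]) (auto simp: sets_sphere_measure_iff)
  finally have "{x \<in> ball 0 1 - {0}. x /\<^sub>R norm x \<in> A} \<in> null_sets lborel"
    using cone by (intro null_sets_subset[OF N]) auto
  then show ?thesis using A by (simp add: null_sets_def emeasure_sphere_measure)
qed

lemma borel_measurable_sphere_measure_continuous:
  fixes f :: "'a::euclidean_space \<Rightarrow> real"
  shows "continuous_on (sphere 0 1) f \<Longrightarrow> f \<in> borel_measurable sphere_measure"
  by (simp add: measurable_cong_sets[OF sets_sphere_measure refl] borel_measurable_continuous_on_restrict)

lemma integrable_sphere_measure_continuous:
  fixes f :: "'a::euclidean_space \<Rightarrow> real"
  assumes f: "continuous_on (sphere 0 1) f"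
  shows "integrable sphere_measure f"
proof -
  interpret finite_measure "sphere_measure :: 'a measure" by (rule finite_measure_sphere_measure)
  obtain B where "\<And>x. x \<in> sphere 0 1 \<Longrightarrow> norm (f x) \<le> B"
    using continuous_on_compact_bound[OF compact_sphere f] by blast
  then show ?thesis
    by (intro integrable_const_bound[where B = B] AE_I2 borel_measurable_sphere_measure_continuous f)
       (auto simp: space_sphere_measure)
qed

lemma integral_dominated_convergence_at:
  fixes s :: "'c::first_countable_topology \<Rightarrow> 'a \<Rightarrow> 'b::{banach, second_countable_topology}"
  assumes "f \<in> borel_measurable M" "\<forall>\<^sub>F t in at a. s t \<in> borel_measurable M" "integrable M w"
    and "AE x in M. ((\<lambda>t. s t x) \<longlongrightarrow> f x) (at a)"
    and "\<forall>\<^sub>F t in at a. AE x in M. norm (s t x) \<le> w x"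
  shows "((\<lambda>t. integral\<^sup>L M (s t)) \<longlongrightarrow> integral\<^sup>L M f) (at a)"
  unfolding tendsto_at_iff_sequentially comp_def
proof (intro allI impI)
  fix X :: "nat \<Rightarrow> 'c" assume "\<forall>i. X i \<in> UNIV - {a}" "X \<longlonglongrightarrow> a"
  then have X: "filterlim X (at a) sequentially"
    by (intro filterlim_atI) auto
  obtain N where N: "\<And>n. N \<le> n \<Longrightarrow> s (X n) \<in> borel_measurable M \<and> (AE x in M. norm (s (X n) x) \<le> w x)"
    using eventually_compose_filterlim[OF eventually_conj[OF assms(2,5)] X]
    by (auto simp: eventually_sequentially)
  have "(\<lambda>n. integral\<^sup>L M (s (X (n + N)))) \<longlonglongrightarrow> integral\<^sup>L M f"
  proof (rule integral_dominated_convergence[OF assms(1) _ assms(3)])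
    show "AE x in M. (\<lambda>n. s (X (n + N)) x) \<longlonglongrightarrow> f x"
      using assms(4) by eventually_elim (intro LIMSEQ_ignore_initial_segment filterlim_compose[OF _ X])
  qed (use N in simp_all)
  then show "(\<lambda>n. integral\<^sup>L M (s (X n))) \<longlonglongrightarrow> integral\<^sup>L M f"
    by (rule LIMSEQ_offset)
qed

lemma abs_exp_diff_le: "\<bar>exp a - exp b\<bar> \<le> exp (max a b) * \<bar>a - b :: real\<bar>"
proof -
  have diff_le: "exp x - exp y \<le> exp x * (x - y)" if "y \<le> x" for x y :: real
    using mult_left_mono[OF exp_ge_add_one_self[of "y - x"], of "exp x"]
    by (simp add: exp_diff algebra_simps)
  show ?thesis
  proof (cases "b \<le> a")
    case True
    then show ?thesis using diff_le[OF True] by (simp add: max_absorb1 abs_of_nonneg)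
  next
    case False
    then show ?thesis using diff_le[of a b] False by (simp add: max_absorb2 abs_of_nonpos abs_minus_commute)
  qed
qed

lemma abs_exp_diff_quotient_le:
  fixes c x y t :: real
  assumes xy: "\<bar>x - y\<bar> \<le> K * \<bar>t\<bar>" and y: "\<bar>y\<bar> \<le> \<Lambda>" and t: "\<bar>t\<bar> \<le> 1" and "0 \<le> K"
  shows "\<bar>(exp (c * x) - exp (c * y)) / t\<bar> \<le> exp (\<bar>c\<bar> * (\<Lambda> + K)) * (\<bar>c\<bar> * K)"
proof -
  have K: "0 \<le> K * \<bar>t\<bar>" "K * \<bar>t\<bar> \<le> K" using t \<open>0 \<le> K\<close> by (auto intro: mult_left_le)
  have "max (c * x) (c * y) \<le> \<bar>c\<bar> * (\<Lambda> + K)"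
  proof -
    have "\<bar>x\<bar> \<le> \<Lambda> + K" "\<bar>y\<bar> \<le> \<Lambda> + K" using xy y K by linarith+
    then have "\<bar>c * x\<bar> \<le> \<bar>c\<bar> * (\<Lambda> + K)" "\<bar>c * y\<bar> \<le> \<bar>c\<bar> * (\<Lambda> + K)"
      by (simp_all add: abs_mult mult_left_mono)
    then show ?thesis by (simp add: abs_le_iff)
  qed
  moreover have "\<bar>c * x - c * y\<bar> \<le> \<bar>c\<bar> * (K * \<bar>t\<bar>)"
    using mult_left_mono[OF xy, of "\<bar>c\<bar>"] by (simp add: abs_mult right_diff_distrib[symmetric])
  ultimately have "\<bar>exp (c * x) - exp (c * y)\<bar> \<le> exp (\<bar>c\<bar> * (\<Lambda> + K)) * (\<bar>c\<bar> * (K * \<bar>t\<bar>))"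
    using abs_exp_diff_le[of "c * x" "c * y"]
    by (meson abs_ge_zero exp_ge_zero exp_le_cancel_iff mult_mono order_trans)
  then show ?thesis
    using K by (cases "t = 0") (auto simp: abs_divide divide_le_eq mult_ac)
qed

lemma tendsto_unique_argmax:
  fixes \<phi> :: "'a::metric_space \<Rightarrow> real"
  assumes S: "compact S" "continuous_on S \<phi>"
    and u0: "u0 \<in> S" "\<And>u. u \<in> S \<Longrightarrow> u \<noteq> u0 \<Longrightarrow> \<phi> u < \<phi> u0"
    and uniform: "uniform_limit S \<psi> \<phi> F"
    and argmax: "\<forall>\<^sub>F t in F. w t \<in> S \<and> (\<forall>u\<in>S. \<psi> t u \<le> \<psi> t (w t))"
  shows "(w \<longlongrightarrow> u0) F"
proof (rule tendstoI)
  fix e :: real assume "0 < e"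
  obtain m where m: "m < \<phi> u0" "\<And>u. u \<in> S \<Longrightarrow> e \<le> dist u u0 \<Longrightarrow> \<phi> u \<le> m"
  proof (cases "S - ball u0 e = {}")
    case True
    show ?thesis
    proof (rule that[of "\<phi> u0 - 1"])
      fix u assume "u \<in> S" "e \<le> dist u u0"
      then have "u \<in> S - ball u0 e" by (simp add: dist_commute)
      with True show "\<phi> u \<le> \<phi> u0 - 1" by blast
    qed simp
  next
    case False
    have "compact (S - ball u0 e)" by (intro compact_diff S(1)) auto
    then obtain u' where "u' \<in> S - ball u0 e" "\<And>u. u \<in> S - ball u0 e \<Longrightarrow> \<phi> u \<le> \<phi> u'"
      using continuous_attains_sup[OF _ False continuous_on_subset[OF S(2)]] by blast
    moreover have "u' \<noteq> u0" using \<open>u' \<in> S - ball u0 e\<close> \<open>0 < e\<close> by auto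
    ultimately show ?thesis using that[of "\<phi> u'"] u0(2) by (auto simp: dist_commute)
  qed
  have "0 < (\<phi> u0 - m) / 2" using m(1) by simp
  show "\<forall>\<^sub>F t in F. dist (w t) u0 < e"
    using uniform_limitD[OF uniform \<open>0 < (\<phi> u0 - m) / 2\<close>] argmax
  proof eventually_elim
    case (elim t)
    then have "\<bar>\<psi> t u0 - \<phi> u0\<bar> < (\<phi> u0 - m) / 2" "\<bar>\<psi> t (w t) - \<phi> (w t)\<bar> < (\<phi> u0 - m) / 2"
      "\<psi> t u0 \<le> \<psi> t (w t)"
      using u0(1) by (auto simp: dist_real_def)
    then have "m < \<phi> (w t)" unfolding abs_less_iff by argo
    then show ?case using m(2) elim by force
  qed
qed

lemma tendsto_uniform_limit_along:
  fixes l :: "'a::topological_space \<Rightarrow> 'b::metric_space"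
  assumes uniform: "uniform_limit S F l net" and l: "continuous_on S l"
    and g: "(g \<longlongrightarrow> x) net" "x \<in> S" "\<forall>\<^sub>F t in net. g t \<in> S"
  shows "((\<lambda>t. F t (g t)) \<longlongrightarrow> l x) net"
proof (rule tendstoI)
  fix e :: real assume "0 < e"
  have "((\<lambda>t. l (g t)) \<longlongrightarrow> l x) net"
    by (rule continuous_on_tendsto_compose[OF l g])
  then have "\<forall>\<^sub>F t in net. dist (l (g t)) (l x) < e / 2"
    using \<open>0 < e\<close> by (intro tendstoD) auto
  moreover have "\<forall>\<^sub>F t in net. \<forall>u\<in>S. dist (F t u) (l u) < e / 2"
    using \<open>0 < e\<close> by (intro uniform_limitD[OF uniform]) auto
  ultimately show "\<forall>\<^sub>F t in net. dist (F t (g t)) (l x) < e"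
    using g(3)
  proof eventually_elim
    case (elim t)
    then have "dist (F t (g t)) (l (g t)) < e / 2" by blast
    then show ?case using elim(1) dist_triangle[of "F t (g t)" "l x" "l (g t)"] by linarith
  qed
qed

lemma tendsto_divide_sandwich:
  fixes a b x :: "real \<Rightarrow> real"
  assumes between: "\<forall>\<^sub>F t in F. a t \<le> x t \<and> x t \<le> b t"
    and a: "((\<lambda>t. a t / t) \<longlongrightarrow> c) F" and b: "((\<lambda>t. b t / t) \<longlongrightarrow> c) F"
  shows "((\<lambda>t. x t / t) \<longlongrightarrow> c) F"
proof -
  have "\<forall>\<^sub>F t in F. norm (x t / t - c) \<le> \<bar>a t / t - c\<bar> + \<bar>b t / t - c\<bar>"
    using between
  proof eventually_elim
    case (elim t)
    show ?case
    proof (cases "0 \<le> t")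
      case True
      then have "a t / t \<le> x t / t" "x t / t \<le> b t / t" using elim by (auto intro: divide_right_mono)
      then show ?thesis by auto
    next
      case False
      then have "b t / t \<le> x t / t" "x t / t \<le> a t / t" using elim by (auto intro: divide_right_mono_neg)
      then show ?thesis by auto
    qed
  qed
  moreover have "((\<lambda>t. \<bar>a t / t - c\<bar> + \<bar>b t / t - c\<bar>) \<longlongrightarrow> 0) F"
    using tendsto_add[OF tendsto_rabs_zero[OF LIM_zero[OF a]] tendsto_rabs_zero[OF LIM_zero[OF b]]] by simp
  ultimately show ?thesis
    by (rule Lim_null_comparison[THEN LIM_zero_cancel])
qed

section \<open>The support function of a generated convex hull\<close>

lemma polar_body_convex_hull: "polar_body (convex hull A) = polar_body A"
proof
  show "polar_body (convex hull A) \<subseteq> polar_body A"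
    unfolding polar_body_def using hull_subset[of A convex] by auto
  show "polar_body A \<subseteq> polar_body (convex hull A)"
  proof
    fix x assume "x \<in> polar_body A"
    then have "convex hull A \<subseteq> {y. x \<bullet> y \<le> 1}"
      by (intro hull_minimal) (auto simp: polar_body_def convex_halfspace_le)
    then show "x \<in> polar_body (convex hull A)" unfolding polar_body_def by auto
  qed
qed

(* The support function of conv_hull_gen \<Omega> r, as a supremum over the generators. *)
definition gen_support :: "'a::euclidean_space set \<Rightarrow> ('a \<Rightarrow> real) \<Rightarrow> 'a \<Rightarrow> real" where
  "gen_support \<Omega> r y = Sup ((\<lambda>u. r u * (u \<bullet> y)) ` \<Omega>)"

definition hull_argmax :: "'a::euclidean_space set \<Rightarrow> ('a \<Rightarrow> real) \<Rightarrow> 'a \<Rightarrow> 'a" where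
  "hull_argmax \<Omega> r y = (SOME u. u \<in> \<Omega> \<and> gen_support \<Omega> r y = r u * (u \<bullet> y))"

locale hull_generator =
  fixes \<Omega> :: "'a::euclidean_space set" and r :: "'a \<Rightarrow> real"
  assumes compact: "compact \<Omega>" and on_sphere: "\<Omega> \<subseteq> sphere 0 1"
    and not_in_hemisphere: "\<not> (\<exists>v\<in>sphere 0 1. \<forall>u\<in>\<Omega>. u \<bullet> v \<ge> 0)"
    and continuous: "continuous_on \<Omega> r" and positive: "\<forall>u\<in>\<Omega>. r u > 0"
begin

lemma nonempty: "\<Omega> \<noteq> {}"
proof
  assume "\<Omega> = {}"
  moreover obtain b :: 'a where "b \<in> Basis" using nonempty_Basis by blast
  then have "b \<in> sphere 0 1" by simp
  ultimately show False using not_in_hemisphere by blast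
qed

lemma le_gen_support: "u \<in> \<Omega> \<Longrightarrow> r u * (u \<bullet> y) \<le> gen_support \<Omega> r y"
  unfolding gen_support_def
  by (intro cSup_upper imageI bounded_imp_bdd_above compact_imp_bounded compact_continuous_image
      compact continuous_intros continuous)

lemma gen_support_attained: "\<exists>u\<in>\<Omega>. gen_support \<Omega> r y = r u * (u \<bullet> y)"
proof -
  have "continuous_on \<Omega> (\<lambda>u. r u * (u \<bullet> y))" by (intro continuous_intros continuous)
  then obtain u where "u \<in> \<Omega>" "\<And>x. x \<in> \<Omega> \<Longrightarrow> r x * (x \<bullet> y) \<le> r u * (u \<bullet> y)"
    using continuous_attains_sup[OF compact nonempty] by blast
  then show ?thesis
    unfolding gen_support_def by (intro bexI[of _ u] cSup_eq_maximum) auto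
qed

lemma hull_argmax_in: "hull_argmax \<Omega> r y \<in> \<Omega>"
  and gen_support_hull_argmax: "gen_support \<Omega> r y = r (hull_argmax \<Omega> r y) * (hull_argmax \<Omega> r y \<bullet> y)"
  using someI_ex[OF gen_support_attained[of y, unfolded Bex_def]] unfolding hull_argmax_def by auto

lemma gen_support_le_iff: "gen_support \<Omega> r y \<le> c \<longleftrightarrow> (\<forall>u\<in>\<Omega>. r u * (u \<bullet> y) \<le> c)"
  using gen_support_attained[of y] le_gen_support[of _ y] by (metis order_trans)

lemma gen_support_scaleR:
  assumes "0 \<le> c"
  shows "gen_support \<Omega> r (c *\<^sub>R y) = c * gen_support \<Omega> r y"
proof (rule antisym)
  show "gen_support \<Omega> r (c *\<^sub>R y) \<le> c * gen_support \<Omega> r y"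
    unfolding gen_support_le_iff
  proof
    fix u assume "u \<in> \<Omega>"
    have "r u * (u \<bullet> (c *\<^sub>R y)) = c * (r u * (u \<bullet> y))" by simp
    also have "\<dots> \<le> c * gen_support \<Omega> r y" by (rule mult_left_mono[OF le_gen_support[OF \<open>u \<in> \<Omega>\<close>] assms])
    finally show "r u * (u \<bullet> (c *\<^sub>R y)) \<le> c * gen_support \<Omega> r y" .
  qed
  obtain u where "u \<in> \<Omega>" "gen_support \<Omega> r y = r u * (u \<bullet> y)"
    using gen_support_attained by blast
  then show "c * gen_support \<Omega> r y \<le> gen_support \<Omega> r (c *\<^sub>R y)"
    using le_gen_support[of u "c *\<^sub>R y"] by (simp add: algebra_simps)
qed

lemma gen_support_pos:
  assumes "y \<noteq> 0"
  shows "0 < gen_support \<Omega> r y"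
proof -
  have "- y /\<^sub>R norm y \<in> sphere 0 1" using assms by simp
  with not_in_hemisphere obtain u where "u \<in> \<Omega>" "\<not> 0 \<le> u \<bullet> (- y /\<^sub>R norm y)"
    by blast
  then have "0 < inverse (norm y) * (u \<bullet> y)" by (simp add: not_le)
  then have "0 < r u * (u \<bullet> y)"
    using assms positive \<open>u \<in> \<Omega>\<close> by (simp add: zero_less_mult_iff)
  then show ?thesis using le_gen_support[OF \<open>u \<in> \<Omega>\<close>, of y] by linarith
qed

lemma gen_support_pos_sphere: "v \<in> sphere 0 1 \<Longrightarrow> 0 < gen_support \<Omega> r v"
  by (intro gen_support_pos) auto

lemma convex_gen_support: "convex_on UNIV (gen_support \<Omega> r)"
proof (rule convex_onI)
  fix t :: real and x y assume t: "0 < t" "t < 1"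
  obtain u where u: "u \<in> \<Omega>" "gen_support \<Omega> r ((1 - t) *\<^sub>R x + t *\<^sub>R y) = r u * (u \<bullet> ((1 - t) *\<^sub>R x + t *\<^sub>R y))"
    using gen_support_attained by blast
  have "r u * (u \<bullet> ((1 - t) *\<^sub>R x + t *\<^sub>R y)) = (1 - t) * (r u * (u \<bullet> x)) + t * (r u * (u \<bullet> y))"
    by (simp add: inner_add_right algebra_simps)
  also have "\<dots> \<le> (1 - t) * gen_support \<Omega> r x + t * gen_support \<Omega> r y"
    using t le_gen_support[OF u(1)] by (intro add_mono mult_left_mono) auto
  finally show "gen_support \<Omega> r ((1 - t) *\<^sub>R x + t *\<^sub>R y) \<le> (1 - t) * gen_support \<Omega> r x + t * gen_support \<Omega> r y"
    using u(2) by simp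
qed simp

lemma continuous_gen_support: "continuous_on UNIV (gen_support \<Omega> r)"
  by (rule convex_on_continuous[OF open_UNIV convex_gen_support])

lemma gen_support_ge_norm: "\<exists>m>0. \<forall>y. m * norm y \<le> gen_support \<Omega> r y"
proof -
  obtain b :: 'a where "b \<in> Basis" using nonempty_Basis by blast
  then have "sphere (0::'a) 1 \<noteq> {}" by (metis empty_iff mem_sphere_0 norm_Basis)
  then obtain v where v: "v \<in> sphere (0::'a) 1" "\<And>x. x \<in> sphere 0 1 \<Longrightarrow> gen_support \<Omega> r v \<le> gen_support \<Omega> r x"
    using continuous_attains_inf[OF compact_sphere _ continuous_on_subset[OF continuous_gen_support subset_UNIV]]
    by blast
  have "gen_support \<Omega> r v * norm y \<le> gen_support \<Omega> r y" for y
  proof (cases "y = 0")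
    case False
    then have "gen_support \<Omega> r v \<le> gen_support \<Omega> r (y /\<^sub>R norm y)" using v(2) by simp
    then show ?thesis using gen_support_scaleR[of "norm y" "y /\<^sub>R norm y"] False
      by (simp add: mult.commute mult_left_mono)
  qed (use gen_support_scaleR[of 0 y] in simp)
  moreover have "0 < gen_support \<Omega> r v" using v(1) by (intro gen_support_pos) auto
  ultimately show ?thesis by blast
qed

lemma polar_conv_hull_gen: "polar_body (conv_hull_gen \<Omega> r) = {x. gen_support \<Omega> r x \<le> 1}"
  unfolding conv_hull_gen_def polar_body_convex_hull
  by (auto simp: polar_body_def gen_support_le_iff inner_commute)

lemma radial_fun_polar:
  assumes "v \<noteq> 0"
  shows "radial_fun (polar_body (conv_hull_gen \<Omega> r)) v = 1 / gen_support \<Omega> r v"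
proof -
  have h: "0 < gen_support \<Omega> r v" using gen_support_pos[OF assms] .
  then have "{s. 0 \<le> s \<and> s *\<^sub>R v \<in> polar_body (conv_hull_gen \<Omega> r)} = {0 .. 1 / gen_support \<Omega> r v}"
    by (auto simp: polar_conv_hull_gen gen_support_scaleR field_simps)
  then show ?thesis unfolding radial_fun_def using h by simp
qed

lemma subgradients_gen_support_iff:
  "p \<in> subgradients (gen_support \<Omega> r) y \<longleftrightarrow>
     (\<forall>z. p \<bullet> z \<le> gen_support \<Omega> r z) \<and> p \<bullet> y = gen_support \<Omega> r y"
proof
  assume p: "p \<in> subgradients (gen_support \<Omega> r) y"
  have "gen_support \<Omega> r y + p \<bullet> (z - y) \<le> gen_support \<Omega> r z" for z
    using p unfolding subgradients_def by blast
  from this[of 0] this[of "2 *\<^sub>R y"] have "p \<bullet> y = gen_support \<Omega> r y"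
    using gen_support_scaleR[of 0 y] gen_support_scaleR[of 2 y] by (simp add: inner_diff_right algebra_simps)
  with \<open>\<And>z. gen_support \<Omega> r y + p \<bullet> (z - y) \<le> gen_support \<Omega> r z\<close> show
    "(\<forall>z. p \<bullet> z \<le> gen_support \<Omega> r z) \<and> p \<bullet> y = gen_support \<Omega> r y"
    by (simp add: inner_diff_right)
qed (auto simp: subgradients_def inner_diff_right)

lemma argmax_subgradient:
  assumes "u \<in> \<Omega>" "gen_support \<Omega> r y = r u * (u \<bullet> y)"
  shows "r u *\<^sub>R u \<in> subgradients (gen_support \<Omega> r) y"
  unfolding subgradients_gen_support_iff using assms le_gen_support by auto

definition kink_dirs :: "'a set" where
  "kink_dirs = sphere 0 1 \<inter> kinks (gen_support \<Omega> r)"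

lemma kink_dirs_null: "kink_dirs \<in> null_sets sphere_measure"
proof (rule null_sets_sphere_measure_if_cone[OF _ kinks_null[OF convex_gen_support]])
  show "kink_dirs \<in> sets sphere_measure"
    using kinks_null[OF convex_gen_support] unfolding sets_sphere_measure_iff kink_dirs_def
    by (auto simp: null_sets_def)
  fix x :: 'a assume "x \<in> ball 0 1 - {0}" "x /\<^sub>R norm x \<in> kink_dirs"
  then show "x \<in> kinks (gen_support \<Omega> r)"
    using kinks_scaleR_iff[of "gen_support \<Omega> r" "norm x" "x /\<^sub>R norm x"]
    by (auto simp: kink_dirs_def gen_support_scaleR)
qed

lemma argmax_unique_off_kinks:
  assumes v: "v \<notin> kinks (gen_support \<Omega> r)"
    and u: "u \<in> \<Omega>" "gen_support \<Omega> r v = r u * (u \<bullet> v)"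
    and u': "u' \<in> \<Omega>" "gen_support \<Omega> r v = r u' * (u' \<bullet> v)"
  shows "u = u'"
proof -
  have eq: "r u *\<^sub>R u = r u' *\<^sub>R u'"
    using subgradients_unique_off_kinks[OF v argmax_subgradient[OF u] argmax_subgradient[OF u']] .
  have "norm (r w *\<^sub>R w) = r w" if "w \<in> \<Omega>" for w
  proof -
    have "norm w = 1" "0 < r w" using that on_sphere positive by auto
    then show ?thesis by simp
  qed
  then have "r u = r u'" using eq u(1) u'(1) by metis
  then show ?thesis using eq positive u(1) by auto
qed

lemma argmax_eq_hull_argmax:
  assumes "v \<in> sphere 0 1 - kink_dirs" "u \<in> \<Omega>" "gen_support \<Omega> r v = r u * (u \<bullet> v)"
  shows "u = hull_argmax \<Omega> r v"
  using argmax_unique_off_kinks[OF _ assms(2,3) hull_argmax_in gen_support_hull_argmax] assms(1) by (auto simp: kink_dirs_def)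

lemma kink_dirs_borel: "kink_dirs \<in> sets borel"
  using kink_dirs_null by (auto simp: null_sets_def sets_sphere_measure_iff)

(* Off kink_dirs this is the unique maximiser of u \<mapsto> r u * (u \<bullet> v); on that null set an
   arbitrary point of \<Omega> is taken, which keeps the map Borel. *)
definition radial_gauss_map :: "'a \<Rightarrow> 'a" where
  "radial_gauss_map v = (if v \<in> kink_dirs then (SOME u. u \<in> \<Omega>) else hull_argmax \<Omega> r v)"

lemma radial_gauss_map_in: "radial_gauss_map v \<in> \<Omega>"
  unfolding radial_gauss_map_def using hull_argmax_in some_in_eq nonempty by auto

lemma closed_argmax_dirs:
  assumes "closed C"
  shows "closed {v \<in> sphere 0 1. \<exists>u\<in>\<Omega> \<inter> C. gen_support \<Omega> r v = r u * (u \<bullet> v)}"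
proof -
  define G where "G = {z \<in> sphere 0 1 \<times> (\<Omega> \<inter> C). r (snd z) * (snd z \<bullet> fst z) - gen_support \<Omega> r (fst z) = 0}"
  have S: "compact (sphere (0::'a) 1 \<times> (\<Omega> \<inter> C))"
    by (intro compact_Times compact_sphere compact_Int_closed compact assms)
  have "continuous_on (sphere 0 1 \<times> (\<Omega> \<inter> C)) (\<lambda>z. r (snd z) * (snd z \<bullet> fst z) - gen_support \<Omega> r (fst z))"
    by (intro continuous_intros continuous_on_compose2[OF continuous] continuous_on_compose2[OF continuous_gen_support])
      auto
  then have "closed G"
    unfolding G_def by (rule continuous_closed_preimage_constant[OF _ compact_imp_closed[OF S]])
  moreover have "G \<subseteq> sphere 0 1 \<times> (\<Omega> \<inter> C)" by (auto simp: G_def)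
  ultimately have "compact G" using compact_Int_closed[OF S] by (metis inf.absorb_iff2)
  then have "closed (fst ` G)"
    by (intro compact_imp_closed compact_continuous_image continuous_on_fst continuous_on_id)
  moreover have "fst ` G = {v \<in> sphere 0 1. \<exists>u\<in>\<Omega> \<inter> C. gen_support \<Omega> r v = r u * (u \<bullet> v)}"
    unfolding G_def by force
  ultimately show ?thesis by simp
qed

lemma radial_gauss_map_measurable:
  "radial_gauss_map \<in> sphere_measure \<rightarrow>\<^sub>M restrict_space borel (sphere 0 1)"
proof (rule measurable_restrict_space2)
  show "radial_gauss_map \<in> space sphere_measure \<rightarrow> sphere 0 1"
    using radial_gauss_map_in on_sphere by auto
  show "radial_gauss_map \<in> borel_measurable sphere_measure"
    unfolding measurable_cong_sets[OF sets_sphere_measure refl]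
  proof (rule borel_measurableI)
    fix S :: "'a set" assume "open S"
    have "radial_gauss_map -` (- S) \<inter> sphere 0 1 =
        (kink_dirs \<inter> {v. (SOME u. u \<in> \<Omega>) \<in> - S}) \<union>
        ({v \<in> sphere 0 1. \<exists>u\<in>\<Omega> \<inter> - S. gen_support \<Omega> r v = r u * (u \<bullet> v)} - kink_dirs)"
    proof (intro set_eqI)
      fix v
      show "v \<in> radial_gauss_map -` (- S) \<inter> sphere 0 1 \<longleftrightarrow> v \<in> (kink_dirs \<inter> {v. (SOME u. u \<in> \<Omega>) \<in> - S}) \<union>
          ({v \<in> sphere 0 1. \<exists>u\<in>\<Omega> \<inter> - S. gen_support \<Omega> r v = r u * (u \<bullet> v)} - kink_dirs)"
      proof (cases "v \<in> kink_dirs")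
        case False
        then show ?thesis
          using hull_argmax_in[of v] gen_support_hull_argmax[of v] argmax_eq_hull_argmax[of v] by (auto simp: radial_gauss_map_def)
      qed (auto simp: radial_gauss_map_def kink_dirs_def)
    qed
    also have "\<dots> \<in> sets borel"
    proof -
      have "closed {v \<in> sphere 0 1. \<exists>u\<in>\<Omega> \<inter> - S. gen_support \<Omega> r v = r u * (u \<bullet> v)}"
        using closed_argmax_dirs \<open>open S\<close> by (simp add: closed_Compl)
      moreover have "{v::'a. (SOME u. u \<in> \<Omega>) \<in> - S} \<in> sets borel"
        by (cases "(SOME u. u \<in> \<Omega>) \<in> - S") auto
      ultimately show ?thesis
        using kink_dirs_borel by (meson borel_closed sets.Diff sets.Int sets.Un)
    qed
    finally have "sphere 0 1 - (radial_gauss_map -` (- S) \<inter> sphere 0 1) \<in> sets borel"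
      by (rule sets.Diff[OF borel_closed[OF closed_sphere]])
    also have "sphere 0 1 - (radial_gauss_map -` (- S) \<inter> sphere 0 1) = radial_gauss_map -` S \<inter> sphere 0 1"
      by blast
    finally show "radial_gauss_map -` S \<inter> space (restrict_space borel (sphere 0 1)) \<in> sets (restrict_space borel (sphere 0 1))"
      by (simp add: sets_restrict_space_iff space_restrict_space)
  qed
qed

abbreviation polar :: "'a set" where
  "polar \<equiv> polar_body (conv_hull_gen \<Omega> r)"

lemma scaled_in_polar: "y \<noteq> 0 \<Longrightarrow> y /\<^sub>R gen_support \<Omega> r y \<in> polar"
  using gen_support_pos[of y] gen_support_scaleR[of "inverse (gen_support \<Omega> r y)" y]
  by (simp add: polar_conv_hull_gen)

lemma bdd_above_polar: "bdd_above ((\<lambda>y. y \<bullet> x) ` polar)"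
proof -
  obtain m where m: "m > 0" "\<And>y. m * norm y \<le> gen_support \<Omega> r y" using gen_support_ge_norm by blast
  have "y \<bullet> x \<le> norm x / m" if "y \<in> polar" for y
  proof -
    have "norm y \<le> 1 / m" using m(2)[of y] that m(1) by (simp add: polar_conv_hull_gen field_simps)
    then show ?thesis
      using Cauchy_Schwarz_ineq2[of y x] m(1) mult_right_mono[of "norm y" "1 / m" "norm x"] by simp
  qed
  then show ?thesis by (intro bdd_aboveI[of _ "norm x / m"]) auto
qed

lemma inner_le_support_polar: "z \<bullet> x \<le> support_fun polar x * gen_support \<Omega> r z"
proof (cases "z = 0")
  case False
  have "(z /\<^sub>R gen_support \<Omega> r z) \<bullet> x \<le> support_fun polar x"
    unfolding support_fun_def by (intro cSup_upper imageI bdd_above_polar scaled_in_polar False)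
  then show ?thesis using gen_support_pos[OF False] by (simp add: field_simps)
qed (simp add: gen_support_scaleR[of 0 0, simplified])

lemma support_polar_pos:
  assumes "x \<noteq> 0"
  shows "0 < support_fun polar x"
proof -
  have "0 < x \<bullet> x" using assms by simp
  moreover have "0 < gen_support \<Omega> r x" using gen_support_pos[OF assms] .
  ultimately show ?thesis
    using inner_le_support_polar[of x x] by (metis mult_nonpos_nonneg not_le order_less_le_trans less_imp_le)
qed

lemma support_polar_le:
  assumes "w \<in> \<Omega>"
  shows "support_fun polar w \<le> 1 / r w"
  unfolding support_fun_def
proof (rule cSup_least)
  have "0 \<in> polar" using gen_support_scaleR[of 0 0] by (simp add: polar_conv_hull_gen)
  then show "(\<lambda>y. y \<bullet> w) ` polar \<noteq> {}" by blast
  fix a assume "a \<in> (\<lambda>y. y \<bullet> w) ` polar"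
  then obtain y where "gen_support \<Omega> r y \<le> 1" "a = y \<bullet> w" by (auto simp: polar_conv_hull_gen)
  then show "a \<le> 1 / r w"
    using le_gen_support[OF assms, of y] positive assms by (simp add: inner_commute field_simps)
qed

lemma radial_point_normal_iff:
  assumes v: "v \<in> sphere 0 1 - kink_dirs" and x: "x \<in> sphere 0 1"
  shows "(radial_fun polar v *\<^sub>R v) \<bullet> x = support_fun polar x \<longleftrightarrow> x = radial_gauss_map v"
proof -
  define w where "w = radial_gauss_map v"
  have w: "w \<in> \<Omega>" "gen_support \<Omega> r v = r w * (w \<bullet> v)" and rw: "0 < r w"
    using v hull_argmax_in gen_support_hull_argmax radial_gauss_map_in positive by (auto simp: w_def radial_gauss_map_def)
  have hv: "0 < gen_support \<Omega> r v" using v by (intro gen_support_pos) auto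
  then have wv: "0 < w \<bullet> v" using w(2) rw by (simp add: zero_less_mult_iff)
  have radial: "radial_fun polar v *\<^sub>R v = v /\<^sub>R gen_support \<Omega> r v"
    using v radial_fun_polar[of v] by (auto simp: divide_inverse_commute)
  show ?thesis
  proof
    assume "x = radial_gauss_map v"
    then have "x = w" by (simp add: w_def)
    have "(v /\<^sub>R gen_support \<Omega> r v) \<bullet> w = 1 / r w"
      using w rw wv by (simp add: inner_commute field_simps)
    moreover have "(v /\<^sub>R gen_support \<Omega> r v) \<bullet> w \<le> support_fun polar w"
      unfolding support_fun_def using v by (intro cSup_upper imageI bdd_above_polar scaled_in_polar) auto
    ultimately show "(radial_fun polar v *\<^sub>R v) \<bullet> x = support_fun polar x"
      unfolding radial \<open>x = w\<close> using support_polar_le[OF w(1)] by linarith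
  next
    assume normal: "(radial_fun polar v *\<^sub>R v) \<bullet> x = support_fun polar x"
    define c where "c = support_fun polar x"
    \<comment> \<open>\<open>x /\<^sub>R c\<close> is a subgradient of the support function at \<open>v\<close>, and off the kinks the only one is \<open>r w *\<^sub>R w\<close>.\<close>
    have "x \<noteq> 0" using x by auto
    then have c: "0 < c" using support_polar_pos unfolding c_def by blast
    have "x /\<^sub>R c \<in> subgradients (gen_support \<Omega> r) v"
      unfolding subgradients_gen_support_iff
      using inner_le_support_polar[of _ x] normal radial c hv
      by (auto simp: c_def inner_commute field_simps)
    then have "x /\<^sub>R c = r w *\<^sub>R w"
      using subgradients_unique_off_kinks argmax_subgradient[OF w] v by (auto simp: kink_dirs_def)
    then have "c *\<^sub>R (x /\<^sub>R c) = c *\<^sub>R (r w *\<^sub>R w)" by simp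
    then have x_eq: "x = (c * r w) *\<^sub>R w" using c by simp
    moreover have "norm x = 1" "norm w = 1" using x w(1) on_sphere by auto
    ultimately have "c * r w = 1" using c rw by simp
    with x_eq show "x = radial_gauss_map v" by (simp add: w_def)
  qed
qed

lemma rev_radial_gauss_polar_iff:
  assumes "v \<in> sphere 0 1 - kink_dirs" "\<eta> \<subseteq> sphere 0 1"
  shows "v \<in> rev_radial_gauss polar \<eta> \<longleftrightarrow> radial_gauss_map v \<in> \<eta>"
proof -
  have "radial_gauss_map v \<in> sphere 0 1" using radial_gauss_map_in[of v] on_sphere by blast
  then show ?thesis
    using radial_point_normal_iff[OF assms(1)] assms unfolding rev_radial_gauss_def by blast
qed

end

section \<open>Dual curvature measures of the polar body\<close>

definition dual_density :: "real \<Rightarrow> real \<Rightarrow> 'a::euclidean_space set \<Rightarrow> 'a set \<Rightarrow> 'a \<Rightarrow> real" where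
  "dual_density q j M Q u =
     radial_fun M u powr q * radial_fun Q u powr (real DIM('a) - q - j) / real DIM('a)"

lemma dual_W_eq_integral: "dual_W q j M Q = integral\<^sup>L sphere_measure (dual_density q j M Q)"
  unfolding dual_W_def dual_density_def by simp

lemma dual_curv_measure_eq:
  "dual_curv_measure q j M Q = measure_of (sphere 0 1) (sets (restrict_space borel (sphere 0 1)))
     (\<lambda>\<eta>. ennreal (LINT u : rev_radial_gauss M \<eta> | completion sphere_measure. dual_density q j M Q u))"
  unfolding dual_curv_measure_def dual_density_def by simp

context hull_generator
begin

lemma rev_radial_gauss_polar_ae:
  assumes a: "a \<in> sets (restrict_space borel (sphere 0 1))"
  shows "rev_radial_gauss polar a \<in> sets (completion sphere_measure)"
    and "AE v in sphere_measure.
           indicator (rev_radial_gauss polar a) v = (indicator (radial_gauss_map -` a \<inter> sphere 0 1) v :: real)"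
proof -
  have a_sphere: "a \<subseteq> sphere 0 1" using a by (simp add: sets_restrict_space_iff)
  have Ua: "radial_gauss_map -` a \<inter> sphere 0 1 \<in> sets sphere_measure"
    using measurable_sets[OF radial_gauss_map_measurable a] by (simp add: space_sphere_measure)
  have "rev_radial_gauss polar a =
      ((radial_gauss_map -` a \<inter> sphere 0 1) - kink_dirs) \<union> (rev_radial_gauss polar a \<inter> kink_dirs)"
    using rev_radial_gauss_polar_iff[OF _ a_sphere] by (auto simp: rev_radial_gauss_def)
  moreover have "(radial_gauss_map -` a \<inter> sphere 0 1) - kink_dirs \<in> sets (completion sphere_measure)"
    using Ua kink_dirs_null by (intro sets_completionI_sets sets.Diff) auto
  moreover have "rev_radial_gauss polar a \<inter> kink_dirs \<in> sets (completion sphere_measure)"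
    by (rule null_sets_completion[OF kink_dirs_null]) auto
  ultimately show "rev_radial_gauss polar a \<in> sets (completion sphere_measure)"
    by (metis sets.Un)
  show "AE v in sphere_measure.
          indicator (rev_radial_gauss polar a) v = (indicator (radial_gauss_map -` a \<inter> sphere 0 1) v :: real)"
    using AE_not_in[OF kink_dirs_null]
    by (rule AE_mp[OF _ AE_I2])
       (auto simp: space_sphere_measure indicator_def rev_radial_gauss_polar_iff[OF _ a_sphere])
qed

lemma borel_measurable_comp_radial_gauss_map:
  fixes f :: "'a \<Rightarrow> real"
  assumes f: "continuous_on \<Omega> f"
  shows "(\<lambda>u. indicator \<Omega> u *\<^sub>R f u) \<in> borel_measurable (restrict_space borel (sphere 0 1))"
    and "(\<lambda>v. f (radial_gauss_map v)) \<in> borel_measurable sphere_measure"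
proof -
  have "(\<lambda>u. indicator \<Omega> u *\<^sub>R f u) \<in> borel_measurable borel"
    using compact by (intro borel_measurable_continuous_on_indicator f) (simp add: borel_closed compact_imp_closed)
  then show f_meas: "(\<lambda>u. indicator \<Omega> u *\<^sub>R f u) \<in> borel_measurable (restrict_space borel (sphere 0 1))"
    by (rule measurable_restrict_space1)
  show "(\<lambda>v. f (radial_gauss_map v)) \<in> borel_measurable sphere_measure"
    using measurable_comp[OF radial_gauss_map_measurable f_meas] radial_gauss_map_in by (simp add: comp_def)
qed

context
  fixes Q :: "'a set" and q j :: real
  assumes continuous_radial_Q: "continuous_on (sphere 0 1) (radial_fun Q)"
    and radial_Q_pos: "\<forall>v\<in>sphere 0 1. 0 < radial_fun Q v"
begin

lemma dual_density_polar:
  assumes "v \<in> sphere 0 1"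
  shows "dual_density q j polar Q v =
           gen_support \<Omega> r v powr (- q) * radial_fun Q v powr (real DIM('a) - q - j) / real DIM('a)"
proof -
  have "v \<noteq> 0" using assms by auto
  then have "radial_fun polar v powr q = gen_support \<Omega> r v powr (- q)"
    using gen_support_pos[of v] by (simp add: radial_fun_polar powr_divide powr_minus_divide)
  then show ?thesis by (simp add: dual_density_def)
qed

lemma continuous_dual_density_polar: "continuous_on (sphere 0 1) (dual_density q j polar Q)"
proof -
  have "continuous_on (sphere 0 1)
      (\<lambda>v. gen_support \<Omega> r v powr (- q) * radial_fun Q v powr (real DIM('a) - q - j) / real DIM('a))"
    using gen_support_pos_sphere radial_Q_pos
    by (intro continuous_intros continuous_on_subset[OF continuous_gen_support] continuous_radial_Q)
       (auto simp del: mem_sphere, fastforce)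
  then show ?thesis by (rule continuous_on_cong[THEN iffD1, OF refl, rotated]) (simp add: dual_density_polar)
qed

lemma dual_density_polar_pos:
  assumes "v \<in> sphere 0 1"
  shows "0 < dual_density q j polar Q v"
proof -
  have "0 < gen_support \<Omega> r v" "0 < radial_fun Q v"
    using gen_support_pos_sphere[OF assms] radial_Q_pos assms by auto
  then show ?thesis by (simp add: dual_density_polar[OF assms])
qed

lemma set_integral_rev_radial_gauss_polar:
  assumes a: "a \<in> sets (restrict_space borel (sphere 0 1))"
  shows "(LINT u : rev_radial_gauss polar a | completion sphere_measure. dual_density q j polar Q u) =
           (\<integral>v. indicator (radial_gauss_map -` a \<inter> sphere 0 1) v * dual_density q j polar Q v \<partial>sphere_measure)"
proof -
  have density: "dual_density q j polar Q \<in> borel_measurable sphere_measure"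
    by (rule borel_measurable_sphere_measure_continuous[OF continuous_dual_density_polar])
  have Ua: "radial_gauss_map -` a \<inter> sphere 0 1 \<in> sets sphere_measure"
    using measurable_sets[OF radial_gauss_map_measurable a] by (simp add: space_sphere_measure)
  have "(LINT u : rev_radial_gauss polar a | completion sphere_measure. dual_density q j polar Q u) =
      (\<integral>v. indicator (radial_gauss_map -` a \<inter> sphere 0 1) v * dual_density q j polar Q v \<partial>completion sphere_measure)"
    unfolding set_lebesgue_integral_def
  proof (rule integral_cong_AE)
    show "AE v in completion sphere_measure. indicator (rev_radial_gauss polar a) v *\<^sub>R dual_density q j polar Q v =
        indicator (radial_gauss_map -` a \<inter> sphere 0 1) v * dual_density q j polar Q v"
      unfolding AE_completion_iff using rev_radial_gauss_polar_ae(2)[OF a] by eventually_elim simp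
  qed (intro borel_measurable_times borel_measurable_scaleR borel_measurable_indicator
         rev_radial_gauss_polar_ae(1)[OF a] sets_completionI_sets[OF Ua] measurable_completion[OF density])+
  also have "\<dots> = (\<integral>v. indicator (radial_gauss_map -` a \<inter> sphere 0 1) v * dual_density q j polar Q v \<partial>sphere_measure)"
    by (intro integral_completion borel_measurable_times borel_measurable_indicator Ua density)
  finally show ?thesis .
qed

lemma dual_curv_measure_polar:
  "dual_curv_measure q j polar Q =
     distr (density sphere_measure (dual_density q j polar Q)) (restrict_space borel (sphere 0 1)) radial_gauss_map"
  (is "_ = ?\<nu>")
proof -
  let ?S = "sets (restrict_space borel (sphere (0::'a) 1))"
  have gauss: "radial_gauss_map \<in> density sphere_measure (dual_density q j polar Q) \<rightarrow>\<^sub>M restrict_space borel (sphere 0 1)"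
    using radial_gauss_map_measurable by (simp add: measurable_cong_sets[OF sets_density refl])
  have "?\<nu> = measure_of (sphere 0 1) ?S (emeasure ?\<nu>)"
    using measure_of_of_measure[of ?\<nu>] by (simp add: space_restrict_space)
  also have "\<dots> = dual_curv_measure q j polar Q"
    unfolding dual_curv_measure_eq
  proof (rule measure_of_eq)
    show "?S \<subseteq> Pow (sphere 0 1)"
      using sets.space_closed[of "restrict_space borel (sphere (0::'a) 1)"] by (simp add: space_restrict_space)
    fix a assume "a \<in> sigma_sets (sphere 0 1) ?S"
    then have a: "a \<in> ?S"
      using sigma_algebra.sigma_sets_eq[OF sets.sigma_algebra_axioms[of "restrict_space borel (sphere (0::'a) 1)"]]
      by (simp add: space_restrict_space)
    have Ua: "radial_gauss_map -` a \<inter> sphere 0 1 \<in> sets sphere_measure"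
      using measurable_sets[OF radial_gauss_map_measurable a] by (simp add: space_sphere_measure)
    have "integrable sphere_measure (\<lambda>v. indicator (radial_gauss_map -` a \<inter> sphere 0 1) v * dual_density q j polar Q v)"
      using integrable_real_mult_indicator[OF Ua integrable_sphere_measure_continuous[OF continuous_dual_density_polar]]
      by (simp add: mult.commute)
    have "emeasure ?\<nu> a = emeasure (density sphere_measure (dual_density q j polar Q)) (radial_gauss_map -` a \<inter> sphere 0 1)"
      using a by (simp add: emeasure_distr[OF gauss] space_sphere_measure)
    also have "\<dots> = (\<integral>\<^sup>+v. ennreal (indicator (radial_gauss_map -` a \<inter> sphere 0 1) v * dual_density q j polar Q v) \<partial>sphere_measure)"
      using Ua borel_measurable_sphere_measure_continuous[OF continuous_dual_density_polar]
      by (simp add: emeasure_density) (intro nn_integral_cong, simp add: indicator_def)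
    also have "\<dots> = ennreal (\<integral>v. indicator (radial_gauss_map -` a \<inter> sphere 0 1) v * dual_density q j polar Q v \<partial>sphere_measure)"
      using \<open>integrable _ _\<close> dual_density_polar_pos
      by (intro nn_integral_eq_integral AE_I2) (auto simp: space_sphere_measure indicator_def less_imp_le)
    finally have "emeasure ?\<nu> a =
        ennreal (\<integral>v. indicator (radial_gauss_map -` a \<inter> sphere 0 1) v * dual_density q j polar Q v \<partial>sphere_measure)" .
    then show "emeasure ?\<nu> a =
        ennreal (LINT u : rev_radial_gauss polar a | completion sphere_measure. dual_density q j polar Q u)"
      by (simp add: set_integral_rev_radial_gauss_polar[OF a])
  qed
  finally show ?thesis ..
qed

lemma integral_dual_curv_measure_polar:
  assumes f: "continuous_on \<Omega> f"
  shows "(LINT u : \<Omega> | dual_curv_measure q j polar Q. f u) =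
           (\<integral>v. dual_density q j polar Q v * f (radial_gauss_map v) \<partial>sphere_measure)"
proof -
  have gauss: "radial_gauss_map \<in> density sphere_measure (dual_density q j polar Q) \<rightarrow>\<^sub>M restrict_space borel (sphere 0 1)"
    using radial_gauss_map_measurable by (simp add: measurable_cong_sets[OF sets_density refl])
  have "(LINT u : \<Omega> | dual_curv_measure q j polar Q. f u) =
      (\<integral>v. indicator \<Omega> (radial_gauss_map v) *\<^sub>R f (radial_gauss_map v) \<partial>density sphere_measure (dual_density q j polar Q))"
    unfolding dual_curv_measure_polar set_lebesgue_integral_def
    by (rule integral_distr[OF gauss borel_measurable_comp_radial_gauss_map(1)[OF f]])
  also have "\<dots> = (\<integral>v. f (radial_gauss_map v) \<partial>density sphere_measure (dual_density q j polar Q))"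
    by (simp add: radial_gauss_map_in)
  also have "\<dots> = (\<integral>v. dual_density q j polar Q v *\<^sub>R f (radial_gauss_map v) \<partial>sphere_measure)"
  proof (rule integral_density)
    show "(\<lambda>v. f (radial_gauss_map v)) \<in> borel_measurable sphere_measure"
      by (rule borel_measurable_comp_radial_gauss_map(2)[OF f])
    show "dual_density q j polar Q \<in> borel_measurable sphere_measure"
      by (rule borel_measurable_sphere_measure_continuous[OF continuous_dual_density_polar])
    show "AE v in sphere_measure. 0 \<le> dual_density q j polar Q v"
      using dual_density_polar_pos by (intro AE_I2) (auto simp: space_sphere_measure less_imp_le)
  qed
  finally show ?thesis by simp
qed

end

end

section \<open>Logarithmic families\<close>

lemma gen_support_cong: "(\<And>u. u \<in> \<Omega> \<Longrightarrow> r u = s u) \<Longrightarrow> gen_support \<Omega> r = gen_support \<Omega> s"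
  unfolding gen_support_def by (intro ext arg_cong[where f = Sup] image_cong) auto

lemma ln_ratio_le_ln_gen_support_ratio:
  assumes r: "hull_generator \<Omega> r" and s: "hull_generator \<Omega> s" and y: "y \<noteq> 0"
    and u: "u \<in> \<Omega>" "gen_support \<Omega> s y = s u * (u \<bullet> y)"
  shows "ln (r u) - ln (s u) \<le> ln (gen_support \<Omega> r y) - ln (gen_support \<Omega> s y)"
proof -
  interpret R: hull_generator \<Omega> r by (rule r)
  interpret S: hull_generator \<Omega> s by (rule s)
  have pos: "0 < r u" "0 < s u" "0 < gen_support \<Omega> s y"
    using R.positive S.positive S.gen_support_pos[OF y] u(1) by auto
  have "gen_support \<Omega> s y * (r u / s u) = r u * (u \<bullet> y)"
    using u(2) pos by (simp add: field_simps)
  also have "\<dots> \<le> gen_support \<Omega> r y" by (rule R.le_gen_support[OF u(1)])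
  finally have "ln (gen_support \<Omega> s y * (r u / s u)) \<le> ln (gen_support \<Omega> r y)"
    using pos by (intro ln_mono) (auto intro: mult_pos_pos divide_pos_pos)
  then show ?thesis using pos by (simp add: ln_mult ln_div)
qed

lemma abs_ln_gen_support_ratio_le:
  assumes r: "hull_generator \<Omega> r" and s: "hull_generator \<Omega> s" and y: "y \<noteq> 0"
    and bound: "\<And>u. u \<in> \<Omega> \<Longrightarrow> \<bar>ln (r u) - ln (s u)\<bar> \<le> B"
  shows "\<bar>ln (gen_support \<Omega> r y) - ln (gen_support \<Omega> s y)\<bar> \<le> B"
proof -
  obtain u where "u \<in> \<Omega>" "gen_support \<Omega> s y = s u * (u \<bullet> y)"
    using hull_generator.gen_support_attained[OF s] by blast
  then have "- B \<le> ln (gen_support \<Omega> r y) - ln (gen_support \<Omega> s y)"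
    using ln_ratio_le_ln_gen_support_ratio[OF r s y] bound by fastforce
  moreover obtain w where "w \<in> \<Omega>" "gen_support \<Omega> r y = r w * (w \<bullet> y)"
    using hull_generator.gen_support_attained[OF r] by blast
  then have "ln (gen_support \<Omega> r y) - ln (gen_support \<Omega> s y) \<le> B"
    using ln_ratio_le_ln_gen_support_ratio[OF s r y] bound[of w] by fastforce
  ultimately show ?thesis by linarith
qed

locale log_hull_family = hull_generator \<Omega> \<rho>0 for \<Omega> and \<rho>0 :: "'a::euclidean_space \<Rightarrow> real" +
  fixes f :: "'a \<Rightarrow> real" and \<rho> :: "real \<Rightarrow> 'a \<Rightarrow> real" and \<delta> :: real
  assumes continuous_f: "continuous_on \<Omega> f"
    and \<delta>_pos: "0 < \<delta>"
    and generator: "\<And>t. \<bar>t\<bar> < \<delta> \<Longrightarrow> continuous_on \<Omega> (\<rho> t) \<and> (\<forall>u\<in>\<Omega>. 0 < \<rho> t u)"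
    and initial: "\<forall>u\<in>\<Omega>. \<rho> 0 u = \<rho>0 u"
    and log_derivative: "uniform_limit \<Omega> (\<lambda>t u. (ln (\<rho> t u) - ln (\<rho>0 u)) / t) f (at 0)"
begin

lemma hull_generator_at: "\<bar>t\<bar> < \<delta> \<Longrightarrow> hull_generator \<Omega> (\<rho> t)"
  using compact on_sphere not_in_hemisphere generator by unfold_locales auto

lemma eventually_small: "\<forall>\<^sub>F t in at 0. \<bar>t\<bar> < \<delta> \<and> \<bar>t\<bar> < 1"
  using \<delta>_pos unfolding eventually_at by (intro exI[of _ "min \<delta> 1"]) auto

lemma gen_support_initial: "gen_support \<Omega> (\<rho> 0) = gen_support \<Omega> \<rho>0"
  using initial by (intro gen_support_cong) auto

lemma ln_ratio_bound: "\<exists>K\<ge>0. \<forall>\<^sub>F t in at 0. \<forall>u\<in>\<Omega>. \<bar>ln (\<rho> t u) - ln (\<rho>0 u)\<bar> \<le> K * \<bar>t\<bar>"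
proof -
  obtain C where "0 \<le> C" and C: "\<And>u. u \<in> \<Omega> \<Longrightarrow> \<bar>f u\<bar> \<le> C"
    using continuous_on_compact_bound[OF compact continuous_f] by (metis real_norm_def)
  have "\<forall>\<^sub>F t in at 0. \<forall>u\<in>\<Omega>. \<bar>ln (\<rho> t u) - ln (\<rho>0 u)\<bar> \<le> (C + 1) * \<bar>t\<bar>"
    using uniform_limitD[OF log_derivative zero_less_one]
  proof eventually_elim
    case (elim t)
    show ?case
    proof
      fix u assume "u \<in> \<Omega>"
      then have "\<bar>(ln (\<rho> t u) - ln (\<rho>0 u)) / t\<bar> \<le> C + 1"
        using elim C[of u] by (auto simp: dist_real_def)
      then show "\<bar>ln (\<rho> t u) - ln (\<rho>0 u)\<bar> \<le> (C + 1) * \<bar>t\<bar>"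
        using initial \<open>u \<in> \<Omega>\<close> by (cases "t = 0") (auto simp: abs_divide divide_le_eq)
    qed
  qed
  then show ?thesis using \<open>0 \<le> C\<close> by (intro exI[of _ "C + 1"]) auto
qed

lemma ln_gen_support_ratio_bound:
  "\<exists>K\<ge>0. \<forall>\<^sub>F t in at 0. \<forall>y. y \<noteq> 0 \<longrightarrow> \<bar>ln (gen_support \<Omega> (\<rho> t) y) - ln (gen_support \<Omega> \<rho>0 y)\<bar> \<le> K * \<bar>t\<bar>"
proof -
  obtain K where "0 \<le> K" and K: "\<forall>\<^sub>F t in at 0. \<forall>u\<in>\<Omega>. \<bar>ln (\<rho> t u) - ln (\<rho>0 u)\<bar> \<le> K * \<bar>t\<bar>"
    using ln_ratio_bound by blast
  have "\<forall>\<^sub>F t in at 0. \<forall>y. y \<noteq> 0 \<longrightarrow> \<bar>ln (gen_support \<Omega> (\<rho> t) y) - ln (gen_support \<Omega> \<rho>0 y)\<bar> \<le> K * \<bar>t\<bar>"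
    using K eventually_small
    by eventually_elim
       (auto intro: abs_ln_gen_support_ratio_le[OF hull_generator_at hull_generator_axioms])
  then show ?thesis using \<open>0 \<le> K\<close> by blast
qed

lemma rho_uniform_limit: "uniform_limit \<Omega> \<rho> \<rho>0 (at 0)"
proof -
  obtain K where "0 \<le> K" and K: "\<forall>\<^sub>F t in at 0. \<forall>u\<in>\<Omega>. \<bar>ln (\<rho> t u) - ln (\<rho>0 u)\<bar> \<le> K * \<bar>t\<bar>"
    using ln_ratio_bound by blast
  have "continuous_on \<Omega> (\<lambda>u. ln (\<rho>0 u))"
    using positive by (intro continuous_intros continuous) auto
  then obtain \<Lambda> where \<Lambda>: "\<And>u. u \<in> \<Omega> \<Longrightarrow> \<bar>ln (\<rho>0 u)\<bar> \<le> \<Lambda>"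
    using continuous_on_compact_bound[OF compact] by (metis real_norm_def)
  define E where "E = exp (\<Lambda> + K) * K"
  have bound: "\<forall>\<^sub>F t in at 0. \<forall>u\<in>\<Omega>. \<bar>\<rho> t u - \<rho>0 u\<bar> \<le> E * \<bar>t\<bar>"
    using K eventually_small
  proof eventually_elim
    case (elim t)
    show ?case
    proof
      fix u assume u: "u \<in> \<Omega>"
      have "\<rho> t u - \<rho>0 u = exp (1 * ln (\<rho> t u)) - exp (1 * ln (\<rho>0 u))"
        using generator elim u positive by simp
      moreover have "\<bar>(exp (1 * ln (\<rho> t u)) - exp (1 * ln (\<rho>0 u))) / t\<bar> \<le> E"
        using abs_exp_diff_quotient_le[where c = 1 and x = "ln (\<rho> t u)" and y = "ln (\<rho>0 u)" and t = t
            and K = K and \<Lambda> = \<Lambda>] elim u \<Lambda>[OF u] \<open>0 \<le> K\<close>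
        by (simp add: E_def)
      ultimately show "\<bar>\<rho> t u - \<rho>0 u\<bar> \<le> E * \<bar>t\<bar>"
        using initial u by (cases "t = 0") (auto simp: abs_divide divide_le_eq)
    qed
  qed
  show ?thesis
  proof (rule uniform_limitI)
    fix e :: real assume "0 < e"
    have "((\<lambda>t. E * \<bar>t\<bar>) \<longlongrightarrow> E * \<bar>0\<bar>) (at 0)" by (intro tendsto_intros)
    then have "\<forall>\<^sub>F t in at 0. E * \<bar>t\<bar> < e" using \<open>0 < e\<close> by (intro order_tendstoD(2)) auto
    then show "\<forall>\<^sub>F t in at 0. \<forall>u\<in>\<Omega>. dist (\<rho> t u) (\<rho>0 u) < e"
      using bound by eventually_elim (auto simp: dist_real_def)
  qed
qed

lemma hull_argmax_tendsto:
  assumes v: "v \<in> sphere 0 1 - kink_dirs"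
  shows "((\<lambda>t. hull_argmax \<Omega> (\<rho> t) v) \<longlongrightarrow> radial_gauss_map v) (at 0)"
proof (rule tendsto_unique_argmax[OF compact])
  show "continuous_on \<Omega> (\<lambda>u. \<rho>0 u * (u \<bullet> v))" by (intro continuous_intros continuous)
  show "radial_gauss_map v \<in> \<Omega>" by (rule radial_gauss_map_in)
  have u0: "gen_support \<Omega> \<rho>0 v = \<rho>0 (radial_gauss_map v) * (radial_gauss_map v \<bullet> v)"
    using v gen_support_hull_argmax[of v] by (simp add: radial_gauss_map_def)
  show "\<rho>0 u * (u \<bullet> v) < \<rho>0 (radial_gauss_map v) * (radial_gauss_map v \<bullet> v)"
    if "u \<in> \<Omega>" "u \<noteq> radial_gauss_map v" for u
  proof -
    have "\<rho>0 u * (u \<bullet> v) \<noteq> gen_support \<Omega> \<rho>0 v"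
      using argmax_eq_hull_argmax[OF v that(1)] that(2) v by (auto simp: radial_gauss_map_def)
    then show ?thesis using le_gen_support[OF that(1), of v] u0 by linarith
  qed
  have "bounded (\<rho>0 ` \<Omega>)" "bounded ((\<lambda>u. u \<bullet> v) ` \<Omega>)"
    by (intro compact_imp_bounded compact_continuous_image compact continuous continuous_intros)+
  then show "uniform_limit \<Omega> (\<lambda>t u. \<rho> t u * (u \<bullet> v)) (\<lambda>u. \<rho>0 u * (u \<bullet> v)) (at 0)"
    by (intro uniform_lim_mult rho_uniform_limit uniform_limit_const)
  show "\<forall>\<^sub>F t in at 0. hull_argmax \<Omega> (\<rho> t) v \<in> \<Omega> \<and>
      (\<forall>u\<in>\<Omega>. \<rho> t u * (u \<bullet> v) \<le> \<rho> t (hull_argmax \<Omega> (\<rho> t) v) * (hull_argmax \<Omega> (\<rho> t) v \<bullet> v))"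
    using eventually_small
  proof eventually_elim
    case (elim t)
    interpret gt: hull_generator \<Omega> "\<rho> t" using hull_generator_at elim by auto
    show ?case using gt.hull_argmax_in[of v] gt.gen_support_hull_argmax[of v] gt.le_gen_support[of _ v] by simp
  qed
qed

(* The increment of ln h at v is squeezed between the increments of ln \<rho> at the maximiser for \<rho>0
   and at the maximiser for \<rho> t, and the latter converges to the former. *)
lemma ln_gen_support_has_derivative:
  assumes v: "v \<in> sphere 0 1 - kink_dirs"
  shows "((\<lambda>t. ln (gen_support \<Omega> (\<rho> t) v)) has_real_derivative f (radial_gauss_map v)) (at 0)"
proof -
  define \<Delta> where "\<Delta> t u = ln (\<rho> t u) - ln (\<rho>0 u)" for t u
  define u0 where "u0 = radial_gauss_map v"
  have v0: "v \<noteq> 0" using v by auto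
  have u0: "u0 \<in> \<Omega>" "gen_support \<Omega> \<rho>0 v = \<rho>0 u0 * (u0 \<bullet> v)"
    using v hull_argmax_in[of v] gen_support_hull_argmax[of v] by (auto simp: u0_def radial_gauss_map_def)
  have "\<forall>\<^sub>F t in at 0. \<Delta> t u0 \<le> ln (gen_support \<Omega> (\<rho> t) v) - ln (gen_support \<Omega> \<rho>0 v) \<and>
      ln (gen_support \<Omega> (\<rho> t) v) - ln (gen_support \<Omega> \<rho>0 v) \<le> \<Delta> t (hull_argmax \<Omega> (\<rho> t) v)"
    using eventually_small
  proof eventually_elim
    case (elim t)
    then have gt: "hull_generator \<Omega> (\<rho> t)" by (intro hull_generator_at) simp
    show ?case
      using ln_ratio_le_ln_gen_support_ratio[OF gt hull_generator_axioms v0 u0]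
        ln_ratio_le_ln_gen_support_ratio[OF hull_generator_axioms gt v0
          hull_generator.hull_argmax_in[OF gt] hull_generator.gen_support_hull_argmax[OF gt]]
      by (simp add: \<Delta>_def)
  qed
  moreover have "((\<lambda>t. \<Delta> t u0 / t) \<longlongrightarrow> f u0) (at 0)"
    unfolding \<Delta>_def by (rule tendsto_uniform_limitI[OF log_derivative u0(1)])
  moreover have "((\<lambda>t. \<Delta> t (hull_argmax \<Omega> (\<rho> t) v) / t) \<longlongrightarrow> f u0) (at 0)"
    unfolding \<Delta>_def u0_def
  proof (rule tendsto_uniform_limit_along[OF log_derivative continuous_f hull_argmax_tendsto[OF v]])
    show "\<forall>\<^sub>F t in at 0. hull_argmax \<Omega> (\<rho> t) v \<in> \<Omega>"
      using eventually_small by eventually_elim (rule hull_generator.hull_argmax_in[OF hull_generator_at], simp)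
  qed (rule radial_gauss_map_in)
  ultimately have "((\<lambda>t. (ln (gen_support \<Omega> (\<rho> t) v) - ln (gen_support \<Omega> \<rho>0 v)) / t) \<longlongrightarrow> f u0) (at 0)"
    by (rule tendsto_divide_sandwich)
  then show ?thesis
    by (simp add: has_field_derivative_iff gen_support_initial u0_def)
qed

lemma conv_hull_gen_initial: "conv_hull_gen \<Omega> (\<rho> 0) = conv_hull_gen \<Omega> \<rho>0"
  unfolding conv_hull_gen_def using initial by (metis (no_types, lifting) image_cong)

context
  fixes Q :: "'a set" and q j :: real
  assumes continuous_radial_Q: "continuous_on (sphere 0 1) (radial_fun Q)"
    and radial_Q_pos: "\<forall>v\<in>sphere 0 1. 0 < radial_fun Q v"
begin

lemma dual_density_at:
  assumes "\<bar>t\<bar> < \<delta>" "v \<in> sphere 0 1"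
  shows "dual_density q j (polar_body (conv_hull_gen \<Omega> (\<rho> t))) Q v =
           exp (- q * ln (gen_support \<Omega> (\<rho> t) v)) * (radial_fun Q v powr (real DIM('a) - q - j) / real DIM('a))"
  using hull_generator.dual_density_polar[OF hull_generator_at[OF assms(1)] continuous_radial_Q radial_Q_pos assms(2)]
    hull_generator.gen_support_pos_sphere[OF hull_generator_at[OF assms(1)] assms(2)]
  by (simp add: powr_def)

lemma dual_density_initial:
  assumes "v \<in> sphere 0 1"
  shows "dual_density q j polar Q v =
           exp (- q * ln (gen_support \<Omega> \<rho>0 v)) * (radial_fun Q v powr (real DIM('a) - q - j) / real DIM('a))"
  using dual_density_at[OF _ assms, of 0] \<delta>_pos by (simp add: conv_hull_gen_initial gen_support_initial)

lemma dual_density_quotient_tendsto: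
  assumes v: "v \<in> sphere 0 1 - kink_dirs"
  shows "((\<lambda>t. (dual_density q j (polar_body (conv_hull_gen \<Omega> (\<rho> t))) Q v - dual_density q j polar Q v) / t)
           \<longlongrightarrow> - q * f (radial_gauss_map v) * dual_density q j polar Q v) (at 0)"
proof -
  define B where "B = radial_fun Q v powr (real DIM('a) - q - j) / real DIM('a)"
  define \<phi> where "\<phi> t = exp (- q * ln (gen_support \<Omega> (\<rho> t) v)) * B" for t
  have dens: "dual_density q j (polar_body (conv_hull_gen \<Omega> (\<rho> t))) Q v = \<phi> t" if "\<bar>t\<bar> < \<delta>" for t
    using dual_density_at[OF that] v by (simp add: \<phi>_def B_def)
  have polar: "dual_density q j polar Q v = \<phi> 0"
    using dens[of 0] \<delta>_pos by (simp add: conv_hull_gen_initial)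
  have "(\<phi> has_real_derivative exp (- q * ln (gen_support \<Omega> (\<rho> 0) v)) * (- q * f (radial_gauss_map v)) * B) (at 0)"
    unfolding \<phi>_def by (intro DERIV_cmult_right DERIV_fun_exp DERIV_cmult ln_gen_support_has_derivative v)
  then have "((\<lambda>t. (\<phi> t - \<phi> 0) / t) \<longlongrightarrow> - q * f (radial_gauss_map v) * \<phi> 0) (at 0)"
    by (simp add: has_field_derivative_iff \<phi>_def mult_ac)
  moreover have "\<forall>\<^sub>F t in at 0. (\<phi> t - \<phi> 0) / t =
      (dual_density q j (polar_body (conv_hull_gen \<Omega> (\<rho> t))) Q v - dual_density q j polar Q v) / t"
    using eventually_small by eventually_elim (simp add: dens polar)
  ultimately show ?thesis unfolding polar by (rule Lim_transform_eventually)
qed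

lemma abs_dual_density_quotient_le:
  assumes t: "\<bar>t\<bar> < \<delta>" "\<bar>t\<bar> \<le> 1" and v: "v \<in> sphere 0 1" and "0 \<le> K"
    and ratio: "\<bar>ln (gen_support \<Omega> (\<rho> t) v) - ln (gen_support \<Omega> \<rho>0 v)\<bar> \<le> K * \<bar>t\<bar>"
    and ln_bound: "\<bar>ln (gen_support \<Omega> \<rho>0 v)\<bar> \<le> \<Lambda>"
  shows "\<bar>(dual_density q j (polar_body (conv_hull_gen \<Omega> (\<rho> t))) Q v - dual_density q j polar Q v) / t\<bar>
           \<le> exp (\<bar>q\<bar> * (\<Lambda> + K)) * (\<bar>q\<bar> * K) * \<bar>radial_fun Q v powr (real DIM('a) - q - j) / real DIM('a)\<bar>"
proof -
  define D where "D = exp (- q * ln (gen_support \<Omega> (\<rho> t) v)) - exp (- q * ln (gen_support \<Omega> \<rho>0 v))"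
  have "dual_density q j (polar_body (conv_hull_gen \<Omega> (\<rho> t))) Q v - dual_density q j polar Q v =
      D * (radial_fun Q v powr (real DIM('a) - q - j) / real DIM('a))"
    using dual_density_at[OF t(1) v] dual_density_initial[OF v]
    by (simp add: D_def left_diff_distrib diff_divide_distrib)
  then have "\<bar>(dual_density q j (polar_body (conv_hull_gen \<Omega> (\<rho> t))) Q v - dual_density q j polar Q v) / t\<bar> =
      \<bar>D / t\<bar> * \<bar>radial_fun Q v powr (real DIM('a) - q - j) / real DIM('a)\<bar>"
    by (simp add: abs_mult)
  also have "\<dots> \<le> exp (\<bar>q\<bar> * (\<Lambda> + K)) * (\<bar>q\<bar> * K) * \<bar>radial_fun Q v powr (real DIM('a) - q - j) / real DIM('a)\<bar>"
    using abs_exp_diff_quotient_le[OF ratio ln_bound t(2) \<open>0 \<le> K\<close>, of "- q"]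
    by (intro mult_right_mono) (simp_all add: D_def)
  finally show ?thesis .
qed

lemma dual_density_quotient_bounded:
  "\<exists>W. \<forall>\<^sub>F t in at 0. \<forall>v\<in>sphere 0 1.
     \<bar>(dual_density q j (polar_body (conv_hull_gen \<Omega> (\<rho> t))) Q v - dual_density q j polar Q v) / t\<bar> \<le> W"
proof -
  obtain K where "0 \<le> K" and K: "\<forall>\<^sub>F t in at 0. \<forall>y. y \<noteq> 0 \<longrightarrow>
      \<bar>ln (gen_support \<Omega> (\<rho> t) y) - ln (gen_support \<Omega> \<rho>0 y)\<bar> \<le> K * \<bar>t\<bar>"
    using ln_gen_support_ratio_bound by blast
  have "\<forall>v\<in>sphere 0 1. gen_support \<Omega> \<rho>0 v \<noteq> 0" using gen_support_pos_sphere by force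
  then have "continuous_on (sphere 0 1) (\<lambda>v. ln (gen_support \<Omega> \<rho>0 v))"
    by (intro continuous_on_ln continuous_on_subset[OF continuous_gen_support]) auto
  then obtain \<Lambda> where \<Lambda>: "\<And>v. v \<in> sphere 0 1 \<Longrightarrow> \<bar>ln (gen_support \<Omega> \<rho>0 v)\<bar> \<le> \<Lambda>"
    using continuous_on_compact_bound[OF compact_sphere] by (metis real_norm_def)
  have "continuous_on (sphere 0 1) (\<lambda>v. radial_fun Q v powr (real DIM('a) - q - j) / real DIM('a))"
    using radial_Q_pos by (intro continuous_intros continuous_radial_Q) auto
  then obtain B where B: "\<And>v. v \<in> sphere 0 1 \<Longrightarrow> \<bar>radial_fun Q v powr (real DIM('a) - q - j) / real DIM('a)\<bar> \<le> B"
    using continuous_on_compact_bound[OF compact_sphere] by (metis real_norm_def)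
  have "\<forall>\<^sub>F t in at 0. \<forall>v\<in>sphere 0 1.
     \<bar>(dual_density q j (polar_body (conv_hull_gen \<Omega> (\<rho> t))) Q v - dual_density q j polar Q v) / t\<bar>
       \<le> exp (\<bar>q\<bar> * (\<Lambda> + K)) * (\<bar>q\<bar> * K) * B"
    using K eventually_small
  proof eventually_elim
    case (elim t)
    show ?case
    proof
      fix v :: 'a assume v: "v \<in> sphere 0 1"
      then have "v \<noteq> 0" by auto
      then have "\<bar>ln (gen_support \<Omega> (\<rho> t) v) - ln (gen_support \<Omega> \<rho>0 v)\<bar> \<le> K * \<bar>t\<bar>"
        using elim by blast
      then have "\<bar>(dual_density q j (polar_body (conv_hull_gen \<Omega> (\<rho> t))) Q v - dual_density q j polar Q v) / t\<bar>
          \<le> exp (\<bar>q\<bar> * (\<Lambda> + K)) * (\<bar>q\<bar> * K) * \<bar>radial_fun Q v powr (real DIM('a) - q - j) / real DIM('a)\<bar>"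
        using elim \<open>0 \<le> K\<close> \<Lambda>[OF v] by (intro abs_dual_density_quotient_le[OF _ _ v]) auto
      also have "\<dots> \<le> exp (\<bar>q\<bar> * (\<Lambda> + K)) * (\<bar>q\<bar> * K) * B"
        using B[OF v] \<open>0 \<le> K\<close> by (intro mult_left_mono) auto
      finally show "\<bar>(dual_density q j (polar_body (conv_hull_gen \<Omega> (\<rho> t))) Q v - dual_density q j polar Q v) / t\<bar>
          \<le> exp (\<bar>q\<bar> * (\<Lambda> + K)) * (\<bar>q\<bar> * K) * B" .
    qed
  qed
  then show ?thesis by blast
qed

lemma dual_W_quotient_eq:
  assumes t: "\<bar>t\<bar> < \<delta>"
  shows "(dual_W q j (polar_body (conv_hull_gen \<Omega> (\<rho> t))) Q - dual_W q j polar Q) / t =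
           (\<integral>v. (dual_density q j (polar_body (conv_hull_gen \<Omega> (\<rho> t))) Q v - dual_density q j polar Q v) / t
             \<partial>sphere_measure)"
proof -
  have "integrable sphere_measure (dual_density q j (polar_body (conv_hull_gen \<Omega> (\<rho> t))) Q)"
    by (intro integrable_sphere_measure_continuous hull_generator.continuous_dual_density_polar[OF
          hull_generator_at[OF t] continuous_radial_Q radial_Q_pos])
  moreover have "integrable sphere_measure (dual_density q j polar Q)"
    by (intro integrable_sphere_measure_continuous continuous_dual_density_polar continuous_radial_Q radial_Q_pos)
  ultimately show ?thesis
    unfolding dual_W_eq_integral integral_divide_zero by (simp only: Bochner_Integration.integral_diff)
qed

theorem dual_W_log_derivative:
  "((\<lambda>t. (dual_W q j (polar_body (conv_hull_gen \<Omega> (\<rho> t))) Q - dual_W q j polar Q) / t)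
     \<longlongrightarrow> - q * (LINT u : \<Omega> | dual_curv_measure q j polar Q. f u)) (at 0)"
proof -
  let ?s = "\<lambda>t v. (dual_density q j (polar_body (conv_hull_gen \<Omega> (\<rho> t))) Q v - dual_density q j polar Q v) / t"
  obtain W where W: "\<forall>\<^sub>F t in at 0. \<forall>v\<in>sphere 0 1. \<bar>?s t v\<bar> \<le> W"
    using dual_density_quotient_bounded by blast
  have lim: "((\<lambda>t. integral\<^sup>L sphere_measure (?s t)) \<longlongrightarrow>
      (\<integral>v. - q * f (radial_gauss_map v) * dual_density q j polar Q v \<partial>sphere_measure)) (at 0)"
  proof (rule integral_dominated_convergence_at[where w = "\<lambda>_. W"])
    show "(\<lambda>v. - q * f (radial_gauss_map v) * dual_density q j polar Q v) \<in> borel_measurable sphere_measure"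
      using borel_measurable_comp_radial_gauss_map(2)[OF continuous_f]
        borel_measurable_sphere_measure_continuous[OF continuous_dual_density_polar[OF continuous_radial_Q radial_Q_pos]]
      by (intro borel_measurable_times borel_measurable_const)
    show "\<forall>\<^sub>F t in at 0. ?s t \<in> borel_measurable sphere_measure"
      using eventually_small
      by eventually_elim
         (intro borel_measurable_divide borel_measurable_diff borel_measurable_const
           borel_measurable_sphere_measure_continuous continuous_dual_density_polar
           hull_generator.continuous_dual_density_polar[OF hull_generator_at] continuous_radial_Q radial_Q_pos, auto)
    show "integrable sphere_measure (\<lambda>_. W)"
      using finite_measure.integrable_const[OF finite_measure_sphere_measure] by blast
    show "AE v in sphere_measure. ((\<lambda>t. ?s t v) \<longlongrightarrow> - q * f (radial_gauss_map v) * dual_density q j polar Q v) (at 0)"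
      using AE_not_in[OF kink_dirs_null]
    proof (rule AE_mp[OF _ AE_I2], intro impI)
      fix v assume "v \<in> space sphere_measure" "v \<notin> kink_dirs"
      then show "((\<lambda>t. ?s t v) \<longlongrightarrow> - q * f (radial_gauss_map v) * dual_density q j polar Q v) (at 0)"
        by (intro dual_density_quotient_tendsto) (simp add: space_sphere_measure)
    qed
    show "\<forall>\<^sub>F t in at 0. AE v in sphere_measure. norm (?s t v) \<le> W"
      using W by eventually_elim (auto simp: space_sphere_measure)
  qed
  have limit: "(\<integral>v. - q * f (radial_gauss_map v) * dual_density q j polar Q v \<partial>sphere_measure) =
      - q * (LINT u : \<Omega> | dual_curv_measure q j polar Q. f u)"
    by (simp add: integral_dual_curv_measure_polar[OF continuous_radial_Q radial_Q_pos continuous_f] mult_ac)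
  have "\<forall>\<^sub>F t in at 0. integral\<^sup>L sphere_measure (?s t) =
      (dual_W q j (polar_body (conv_hull_gen \<Omega> (\<rho> t))) Q - dual_W q j polar Q) / t"
    using eventually_small by eventually_elim (simp add: dual_W_quotient_eq)
  then show ?thesis by (rule Lim_transform_eventually[OF lim[unfolded limit]])
qed

end

end

lemma log_family_imp_log_hull_family:
  assumes generator: "hull_generator \<Omega> \<rho>0" and f: "continuous_on \<Omega> f"
    and family: "log_family \<Omega> \<rho>0 f \<rho>"
  shows "\<exists>\<delta>. log_hull_family \<Omega> \<rho>0 f \<rho> \<delta>"
proof -
  obtain \<delta> where \<delta>: "0 < \<delta>" "\<And>t. \<bar>t\<bar> < \<delta> \<Longrightarrow> continuous_on \<Omega> (\<rho> t) \<and> (\<forall>u\<in>\<Omega>. 0 < \<rho> t u)"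
      "\<forall>u\<in>\<Omega>. \<rho> 0 u = \<rho>0 u"
    and remainder: "\<And>\<epsilon>. 0 < \<epsilon> \<Longrightarrow> \<exists>d>0. \<forall>t. t \<noteq> 0 \<and> \<bar>t\<bar> < d \<longrightarrow>
        (\<forall>u\<in>\<Omega>. \<bar>(ln (\<rho> t u) - ln (\<rho>0 u) - t * f u) / t\<bar> \<le> \<epsilon>)"
    using family unfolding log_family_def by blast
  have "uniform_limit \<Omega> (\<lambda>t u. (ln (\<rho> t u) - ln (\<rho>0 u)) / t) f (at 0)"
  proof (rule uniform_limitI)
    fix e :: real assume "0 < e"
    then obtain d where "0 < d" and d: "\<And>t u. t \<noteq> 0 \<Longrightarrow> \<bar>t\<bar> < d \<Longrightarrow> u \<in> \<Omega> \<Longrightarrow>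
        \<bar>(ln (\<rho> t u) - ln (\<rho>0 u) - t * f u) / t\<bar> \<le> e / 2"
      using remainder[of "e / 2"] by auto
    have "dist ((ln (\<rho> t u) - ln (\<rho>0 u)) / t) (f u) < e" if "t \<noteq> 0" "\<bar>t\<bar> < d" "u \<in> \<Omega>" for t u
      using d[OF that] \<open>0 < e\<close> that(1) by (simp add: dist_real_def diff_divide_distrib)
    then show "\<forall>\<^sub>F t in at 0. \<forall>u\<in>\<Omega>. dist ((ln (\<rho> t u) - ln (\<rho>0 u)) / t) (f u) < e"
      unfolding eventually_at using \<open>0 < d\<close> by (auto intro!: exI[of _ d])
  qed
  then show ?thesis
    using generator f \<delta> unfolding log_hull_family_def log_hull_family_axioms_def by blast
qed

theorem theorem4p1:
  fixes \<Omega> :: "'a::euclidean_space set"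
    and \<rho>0 f :: "'a \<Rightarrow> real" and \<rho> :: "real \<Rightarrow> 'a \<Rightarrow> real"
    and q j :: real and Q :: "'a set"
  assumes "closed \<Omega>" and "\<Omega> \<subseteq> sphere 0 1"
    and "\<not> (\<exists>v\<in>sphere 0 1. \<forall>u\<in>\<Omega>. u \<bullet> v \<ge> 0)"
    and "continuous_on \<Omega> \<rho>0" and "\<forall>u\<in>\<Omega>. \<rho>0 u > 0"
    and "continuous_on \<Omega> f"
    and "log_family \<Omega> \<rho>0 f \<rho>"
    and "q \<noteq> 0" and "j \<noteq> real DIM('a)"
    and "star_body_o Q"
  shows "((\<lambda>t. (dual_W q j (polar_body (conv_hull_gen \<Omega> (\<rho> t))) Q
                 - dual_W q j (polar_body (conv_hull_gen \<Omega> \<rho>0)) Q) / t)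
          \<longlongrightarrow> - q * (LINT u : \<Omega> | dual_curv_measure q j (polar_body (conv_hull_gen \<Omega> \<rho>0)) Q. f u))
         (at 0)"
proof -
  have "compact \<Omega>"
    using assms(1,2) by (meson bounded_subset bounded_sphere compact_eq_bounded_closed)
  then have "hull_generator \<Omega> \<rho>0"
    using assms(2-5) by unfold_locales
  then obtain \<delta> where "log_hull_family \<Omega> \<rho>0 f \<rho> \<delta>"
    using log_family_imp_log_hull_family assms(6,7) by blast
  then interpret log_hull_family \<Omega> \<rho>0 f \<rho> \<delta> .
  show ?thesis
    using assms(10) unfolding star_body_o_def by (intro dual_W_log_derivative) auto
qed

end
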